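(* Let $I=[x_1,x_N]$ with partition $x_1<\dots<x_N$ and affine maps $u_i(x)=a_ix+b_i$ with $u_i(x_1)=x_i$, $u_i(x_N)=x_{i+1}$ ($i\in\mathbb{N}_{N-1}$). Let $\{f_k\}_{k\ge1}$ be a sequence of positive functions in $C(I)$ converging in sup-norm to $f\in C(I)$, and let $\{q_n\}_{n\ge1}$ be a sequence in $(0,1]$ with $\lim q_n=1$. For $k,n\in\mathbb{N}$ let $f^{(q_n,\alpha)}_{k,n}$ be the quantum MKZ-fractal function of $f_k$ with parameter $q_n$, i.e. the unique $g\in C(I)$ with $g(u_i(x))=f_k(u_i(x))+\alpha_i(x)(g(x)-M_{n,q_n}f_k(x))$ for all $x\in I$, $i\in\mathbb{N}_{N-1}$. Set $\phi(f_k,i)=\min_{x\in I}f_k(u_i(x))$, $\Phi(f_k,i)=\max_{x\in I}f_k(u_i(x))$, $\phi_{n,k}(f_k)=\min_{x\in I}M_{n,q_n}f_k(x)$, $\Phi_{n,k}(f_k)=\max_{x\in I}M_{n,q_n}f_k(x)$, and let $C^\dagger_{n,k}$ be a positive real number strictly greater than $\max\{\phi_{n,k}(f_k),\|f_k\|_\infty\}$. Suppose the continuous scaling functions satisfy (1) $\|\alpha_i\|_\infty<1$ for all $i$ and (2) for all $k,n\in\mathbb{N}$, $i\in\mathbb{N}_{N-1}$, $x\in I$: \[ \max\left\{\frac{-\phi(f_k,i)}{C^\dagger_{n,k}-\phi_{n,k}(f_k)},-\frac{C^\dagger_{n,k}-\Phi(f_k,i)}{\Phi_{n,k}(f_k)}\right\}\le\alpha_i(x)\le\min\left\{\frac{\phi(f_k,i)}{\Phi_{n,k}(f_k)},\frac{C^\dagger_{n,k}-\Phi(f_k,i)}{C^\dagger_{n,k}-\phi_{n,k}(f_k)}\right\}.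 \] Then every $f^{(q_n,\alpha)}_{k,n}$ is positive on $I$, and the double sequence $\{\{f^{(q_n,\alpha)}_{k,n}\}_n\}_k$ converges to $f$ in sup-norm, i.e. for every $\varepsilon>0$ there is $k_0$ with $\|f^{(q_n,\alpha)}_{k,n}-f\|_\infty<\varepsilon$ for all $k,n\ge k_0$.
   Context: A function is called positive if it is $\ge0$ on $I$. For $q\in(0,1]$: $[k]_q=\frac{1-q^k}{1-q}$ ($q\ne1$), $[k]_1=k$, $q$-factorials, $\binom{n}{k}_q=\frac{[n]_q!}{[k]_q![n-k]_q!}$. Quantum MKZ operator: $M_{n,q}h(x)=P_{n,q}(x)\sum_{k\ge0}\binom{n+k}{k}_q\left(\frac{x-x_1}{x_N-x_1}\right)^k h\!\left(x_1+(x_N-x_1)\frac{[k]_q}{[k+n]_q}\right)$ for $x_1\le x<x_N$, $M_{n,q}h(x_N)=h(x_N)$, $P_{n,q}(x)=\prod_{j=0}^n(x_N-x_1-q^j(x-x_1))/(x_N-x_1)^{n+1}$. $\|\alpha\|_\infty=\max_i\|\alpha_i\|_\infty$. *)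

theory Defs
  imports "HOL-Analysis.Analysis"
begin

definition qint :: "real \<Rightarrow> nat \<Rightarrow> real" where
  "qint q k = (if q = 1 then real k else (1 - q ^ k) / (1 - q))"

definition qfact :: "real \<Rightarrow> nat \<Rightarrow> real" where
  "qfact q n = (\<Prod>j=1..n. qint q j)"

definition qbinom :: "real \<Rightarrow> nat \<Rightarrow> nat \<Rightarrow> real" where
  "qbinom q n k = qfact q n / (qfact q k * qfact q (n - k))"

definition supnorm :: "real set \<Rightarrow> (real \<Rightarrow> real) \<Rightarrow> real" where
  "supnorm S g = (SUP x\<in>S. \<bar>g x\<bar>)"

definition PMKZ :: "real \<Rightarrow> real \<Rightarrow> nat \<Rightarrow> real \<Rightarrow> real \<Rightarrow> real" where
  "PMKZ x1 xN n q x = (\<Prod>j=0..n. (xN - x1 - q ^ j * (x - x1))) / (xN - x1) ^ (n + 1)"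

definition MKZ :: "real \<Rightarrow> real \<Rightarrow> nat \<Rightarrow> real \<Rightarrow> (real \<Rightarrow> real) \<Rightarrow> real \<Rightarrow> real" where
  "MKZ x1 xN n q h x =
     (if x = xN then h xN
      else PMKZ x1 xN n q x *
        (\<Sum>k. qbinom q (n + k) k * ((x - x1) / (xN - x1)) ^ k *
               h (x1 + (xN - x1) * qint q k / qint q (k + n))))"

text \<open>Quantum MKZ fractal function of h with parameter q: the unique continuous g on
  I = [x 1, x N] satisfying the self-referential equation; outside I it is normalised to 0
  so that it is unique as a HOL function.\<close>
definition qfractal ::
  "(nat \<Rightarrow> real) \<Rightarrow> nat \<Rightarrow> (nat \<Rightarrow> real) \<Rightarrow> (nat \<Rightarrow> real) \<Rightarrow> (nat \<Rightarrow> real \<Rightarrow> real)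
    \<Rightarrow> nat \<Rightarrow> real \<Rightarrow> (real \<Rightarrow> real) \<Rightarrow> (real \<Rightarrow> real)" where
  "qfractal x N a b \<alpha> n q h =
     (THE g. continuous_on {x 1..x N} g \<and> (\<forall>y. y \<notin> {x 1..x N} \<longrightarrow> g y = 0) \<and>
        (\<forall>i\<in>{1..N-1}. \<forall>y\<in>{x 1..x N}.
           g (a i * y + b i) = h (a i * y + b i) + \<alpha> i y * (g y - MKZ (x 1) (x N) n q h y)))"

end

(*
  For x < x_N the operator M_{n,q} is an average: with t = (x - x_1) / (x_N - x_1) it weighs the
  values of h at the nodes x_1 + (x_N - x_1) [k]_q / [k + n]_q by P_{n,q}(t) binom(n + k, k)_q t^k,
  and these weights sum to 1 because 1 / P_{n,q}(t) is their generating function.  Their first two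
  moments bound the variance of the nodes by (x_N - x_1)^2 / [n + 1]_q, and [n + 1]_{q_n} tends to
  infinity as q_n tends to 1, so M_{n,q_n} f tends to f uniformly (Korovkin's argument).

  The fractal function is the fixed point of the Read-Bajraktarevic operator, which is a contraction
  with constant c = max_i ||alpha_i|| < 1.  Every point of [x_1, x_N] is of the form u_i(y), so at a
  maximum of a continuous quantity built from g the self-referential equation can be applied.
  This gives ||g - f_k|| <= c / (1 - c) ||f_k - M f_k||, hence the double limit, and, under the
  bounds (2) on alpha_i, the invariance of the slab 0 <= g <= C, hence positivity.
*)

theory Submission
  imports Defs
begin

section \<open>\<open>q\<close>-integers\<close>

lemma qint_0 [simp]: "qint q 0 = 0"
  by (simp add: qint_def)

lemma qint_Suc: "qint q (Suc k) = 1 + q * qint q k"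
  by (cases "q = 1") (auto simp: qint_def field_simps)

lemma qint_add: "qint q (m + k) = qint q k + q ^ k * qint q m"
  by (induction k) (auto simp: qint_Suc algebra_simps)

lemma qint_eq_sum: "qint q k = (\<Sum>j<k. q ^ j)"
  by (induction k) (simp_all add: qint_Suc sum.lessThan_Suc_shift sum_distrib_left del: sum.lessThan_Suc)

lemma qint_nonneg: "0 \<le> q \<Longrightarrow> 0 \<le> qint q k"
  by (simp add: qint_eq_sum sum_nonneg)

lemma qint_pos: "0 \<le> q \<Longrightarrow> 0 < k \<Longrightarrow> 0 < qint q k"
  using qint_Suc[of q "k - 1"] qint_nonneg[of q "k - 1"] by (simp add: add_pos_nonneg)

lemma qint_mono: "0 \<le> q \<Longrightarrow> k \<le> m \<Longrightarrow> qint q k \<le> qint q m"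
  using qint_add[of q "m - k" k] qint_nonneg[of q "m - k"] by simp

lemma qint_Suc_ge: "0 \<le> q \<Longrightarrow> q \<le> 1 \<Longrightarrow> real (Suc k) * q ^ k \<le> qint q (Suc k)"
  using sum_mono[of "{..<Suc k}" "\<lambda>_. q ^ k" "\<lambda>j. q ^ j"]
  by (simp add: qint_eq_sum power_decreasing del: sum.lessThan_Suc)

lemma qint_Suc_tendsto_at_top:
  fixes q :: "nat \<Rightarrow> real"
  assumes q_lim: "q \<longlonglongrightarrow> 1" and q_range: "\<forall>\<^sub>F n in sequentially. 0 \<le> q n \<and> q n \<le> 1"
  shows "filterlim (\<lambda>n. qint (q n) (Suc n)) at_top sequentially"
  unfolding filterlim_at_top
proof
  fix Z :: real
  obtain k :: nat where k: "2 * Z \<le> real (Suc k)"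
    by (meson real_arch_simple le_SucI of_nat_le_iff order_trans)
  have "(\<lambda>n. q n ^ k) \<longlonglongrightarrow> 1"
    using tendsto_power[OF q_lim, of k] by simp
  then have "\<forall>\<^sub>F n in sequentially. 1 / 2 < q n ^ k"
    by (rule order_tendstoD) simp
  with q_range eventually_ge_at_top[of k]
  show "\<forall>\<^sub>F n in sequentially. Z \<le> qint (q n) (Suc n)"
  proof eventually_elim
    case (elim n)
    have "Z \<le> real (Suc k) * (1 / 2)" using k by simp
    also have "\<dots> \<le> real (Suc k) * q n ^ k" using elim by (intro mult_left_mono) auto
    also have "\<dots> \<le> qint (q n) (Suc k)" using qint_Suc_ge elim by blast
    also have "\<dots> \<le> qint (q n) (Suc n)" using qint_mono elim by simp
    finally show ?case .
  qed
qed

lemma qfact_0 [simp]: "qfact q 0 = 1"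
  by (simp add: qfact_def)

lemma qfact_Suc: "qfact q (Suc n) = qfact q n * qint q (Suc n)"
  by (simp add: qfact_def)

lemma qfact_pos: "0 \<le> q \<Longrightarrow> 0 < qfact q n"
  by (induction n) (simp_all add: qfact_Suc qint_pos)

section \<open>The weights of the quantum MKZ operator\<close>

definition mkz_coeff :: "real \<Rightarrow> nat \<Rightarrow> nat \<Rightarrow> real" where
  "mkz_coeff q n k = qbinom q (n + k) k"

lemma mkz_coeff_eq: "mkz_coeff q n k = qfact q (n + k) / (qfact q k * qfact q n)"
  by (simp add: mkz_coeff_def qbinom_def)

lemma mkz_coeff_pos: "0 \<le> q \<Longrightarrow> 0 < mkz_coeff q n k"
  by (simp add: mkz_coeff_eq qfact_pos)

lemma mkz_coeff_0_right [simp]: "0 \<le> q \<Longrightarrow> mkz_coeff q n 0 = 1"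
  using qfact_pos[of q n] by (simp add: mkz_coeff_eq)

lemma mkz_coeff_0_left [simp]: "0 \<le> q \<Longrightarrow> mkz_coeff q 0 k = 1"
  using qfact_pos[of q k] by (simp add: mkz_coeff_eq)

lemma mkz_coeff_Suc_right:
  "0 \<le> q \<Longrightarrow> qint q (Suc k) * mkz_coeff q n (Suc k) = qint q (n + Suc k) * mkz_coeff q n k"
  using qfact_pos[of q] qint_pos[of q "Suc k"] by (simp add: mkz_coeff_eq qfact_Suc field_simps)

lemma mkz_coeff_pascal:
  assumes "0 \<le> q"
  shows "mkz_coeff q (Suc n) (Suc k) = mkz_coeff q n (Suc k) + q ^ Suc n * mkz_coeff q (Suc n) k"
proof -
  have "qint q (Suc n + Suc k) = qint q (Suc n) + q ^ Suc n * qint q (Suc k)"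
    using qint_add[of q "Suc k" "Suc n"] by (simp add: add.commute)
  then show ?thesis
    using qfact_pos[OF assms, of k] qfact_pos[OF assms, of n] qint_pos[OF assms, of "Suc k"]
      qint_pos[OF assms, of "Suc n"]
    by (simp add: mkz_coeff_eq qfact_Suc field_simps)
qed

lemma mkz_coeff_Suc_left:
  assumes "0 \<le> q"
  shows "mkz_coeff q (Suc n) k = (\<Sum>j\<le>k. mkz_coeff q n j * (q ^ Suc n) ^ (k - j))"
proof (induction k)
  case (Suc k)
  have "(\<Sum>j\<le>k. mkz_coeff q n j * (q ^ Suc n) ^ (Suc k - j))
      = q ^ Suc n * (\<Sum>j\<le>k. mkz_coeff q n j * (q ^ Suc n) ^ (k - j))"
    by (simp add: sum_distrib_left Suc_diff_le mult_ac)
  then show ?case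
    using Suc.IH by (simp add: mkz_coeff_pascal[OF assms])
qed (simp add: assms)

definition mkz_factor :: "real \<Rightarrow> nat \<Rightarrow> real \<Rightarrow> real" where
  "mkz_factor q n t = (\<Prod>j=0..n. 1 - q ^ j * t)"

lemma mkz_factor_Suc: "mkz_factor q (Suc n) t = mkz_factor q n t * (1 - q ^ Suc n * t)"
  by (simp add: mkz_factor_def)

lemma mkz_factor_at_1 [simp]: "mkz_factor q n 1 = 0"
  unfolding mkz_factor_def by (rule prod_zero) (auto intro!: bexI[of _ 0])

lemma mkz_factor_pos:
  assumes "0 \<le> q" "q \<le> 1" "t < 1"
  shows "0 < mkz_factor q n t"
proof -
  have "q ^ j * t < 1" for j
  proof (cases "t \<le> 0")
    case True
    then show ?thesis using mult_nonneg_nonpos[of "q ^ j" t] assms by simp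
  next
    case False
    then have "q ^ j * t \<le> t"
      using assms by (intro mult_left_le_one_le) (auto intro: power_le_one)
    then show ?thesis using assms by simp
  qed
  then show ?thesis
    unfolding mkz_factor_def by (intro prod_pos) auto
qed

lemma mkz_coeff_Suc_left_series:
  assumes "0 \<le> q"
  shows "mkz_coeff q (Suc n) k * t ^ k = (\<Sum>j\<le>k. (mkz_coeff q n j * t ^ j) * (q ^ Suc n * t) ^ (k - j))"
proof -
  have "(mkz_coeff q n j * t ^ j) * (q ^ Suc n * t) ^ (k - j) = t ^ k * (mkz_coeff q n j * (q ^ Suc n) ^ (k - j))"
    if jk: "j \<le> k" for j
  proof -
    obtain d where "k = j + d"
      using le_Suc_ex[OF jk] by blast
    then have "k - j = d" "(q ^ Suc n * t) ^ d = (q ^ Suc n) ^ d * t ^ d" "t ^ k = t ^ j * t ^ d"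
      by (simp_all only: power_mult_distrib power_add diff_add_inverse)
    then show ?thesis
      by (simp only: mult_ac)
  qed
  then have "(\<Sum>j\<le>k. (mkz_coeff q n j * t ^ j) * (q ^ Suc n * t) ^ (k - j))
      = (\<Sum>j\<le>k. t ^ k * (mkz_coeff q n j * (q ^ Suc n) ^ (k - j)))"
    by (intro sum.cong) auto
  also have "\<dots> = mkz_coeff q (Suc n) k * t ^ k"
    unfolding sum_distrib_left[symmetric] mkz_coeff_Suc_left[OF assms] by (rule mult.commute)
  finally show ?thesis ..
qed

lemma mkz_generating_function:
  assumes q: "0 \<le> q" "q \<le> 1" and t: "0 \<le> t" "t < 1"
  shows "(\<lambda>k. mkz_coeff q n k * t ^ k) sums inverse (mkz_factor q n t)"
proof (induction n)
  case 0
  then show ?case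
    using geometric_sums[of t] q t by (simp add: mkz_factor_def inverse_eq_divide)
next
  case (Suc n)
  define r where "r = q ^ Suc n * t"
  have r: "0 \<le> r" "r < 1"
    using q t mult_left_le_one_le[of t "q ^ Suc n"] power_le_one[of q "Suc n"]
    by (auto simp: r_def)
  have "norm (mkz_coeff q n k * t ^ k) = mkz_coeff q n k * t ^ k" for k
    using mkz_coeff_pos[OF q(1), of n k] t by simp
  then have "(\<lambda>k. \<Sum>j\<le>k. (mkz_coeff q n j * t ^ j) * r ^ (k - j))
      sums ((\<Sum>k. mkz_coeff q n k * t ^ k) * (\<Sum>k. r ^ k))"
    using Suc.IH summable_geometric[of r] r
    by (intro Cauchy_product_sums) (simp_all add: sums_iff)
  moreover have "(\<Sum>j\<le>k. (mkz_coeff q n j * t ^ j) * r ^ (k - j)) = mkz_coeff q (Suc n) k * t ^ k" for k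
    by (simp add: mkz_coeff_Suc_left_series[OF q(1)] r_def)
  ultimately have "(\<lambda>k. mkz_coeff q (Suc n) k * t ^ k) sums (inverse (mkz_factor q n t) * (1 / (1 - r)))"
    using r by (simp add: sums_unique[OF Suc.IH, symmetric] suminf_geometric)
  then show ?case
    by (simp add: mkz_factor_Suc r_def inverse_eq_divide)
qed

text \<open>Weights and nodes of \<open>M\<^sub>n\<^sub>,\<^sub>q\<close> in the variable \<open>t = (x - x\<^sub>1) / (x\<^sub>N - x\<^sub>1)\<close>;
  the node \<open>mkz_node q n k\<close> stands for the point \<open>x\<^sub>1 + (x\<^sub>N - x\<^sub>1) mkz_node q n k\<close>.\<close>

definition mkz_weight :: "real \<Rightarrow> nat \<Rightarrow> real \<Rightarrow> nat \<Rightarrow> real" where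
  "mkz_weight q n t k = mkz_factor q n t * mkz_coeff q n k * t ^ k"

definition mkz_node :: "real \<Rightarrow> nat \<Rightarrow> nat \<Rightarrow> real" where
  "mkz_node q n k = qint q k / qint q (k + n)"

lemma mkz_node_0 [simp]: "mkz_node q n 0 = 0"
  by (simp add: mkz_node_def)

lemma mkz_node_nonneg: "0 \<le> q \<Longrightarrow> 0 \<le> mkz_node q n k"
  by (simp add: mkz_node_def qint_nonneg)

lemma mkz_node_le_1: "0 \<le> q \<Longrightarrow> mkz_node q n k \<le> 1"
  using qint_mono[of q k "k + n"] qint_pos[of q "k + n"] qint_nonneg[of q k]
  by (cases "k + n = 0") (auto simp: mkz_node_def divide_le_eq_1)

lemma mkz_node_Suc_le:
  assumes "0 \<le> q" "q \<le> 1"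
  shows "mkz_node q n (Suc k) \<le> 1 / qint q (Suc n) + mkz_node q n k"
proof -
  have pos: "0 < qint q (Suc n)" "0 < qint q (Suc k + n)"
    using qint_pos[OF assms(1)] by auto
  have "1 / qint q (Suc k + n) \<le> 1 / qint q (Suc n)"
    using pos qint_mono[OF assms(1), of "Suc n" "Suc k + n"] by (intro divide_left_mono) auto
  moreover have "q * qint q k / qint q (Suc k + n) \<le> mkz_node q n k"
  proof (cases "k = 0")
    case False
    have "q * qint q k \<le> qint q k"
      using assms qint_nonneg[OF assms(1), of k] by (simp add: mult_left_le_one_le)
    then show ?thesis
      unfolding mkz_node_def using False assms qint_nonneg[OF assms(1), of k]
      by (intro frac_le) (simp_all add: qint_pos qint_mono)
  qed simp
  ultimately show ?thesis
    by (simp add: mkz_node_def qint_Suc add_divide_distrib)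
qed

lemma mkz_node_tendsto:
  assumes q: "0 < q" "q \<le> 1" and n: "0 < n"
  shows "mkz_node q n \<longlonglongrightarrow> 1"
proof (rule tendsto_sandwich)
  have "1 - mkz_node q n k \<le> qint q n / real (Suc k)" for k
  proof -
    have pos: "0 < qint q (k + n)" "0 < q ^ k"
      using q n qint_pos by auto
    have "q ^ k * real (Suc k) \<le> qint q (k + n)"
      using qint_Suc_ge[of q k] qint_mono[of q "Suc k" "k + n"] q n by (simp add: mult.commute)
    then have "q ^ k * qint q n / qint q (k + n) \<le> q ^ k * qint q n / (q ^ k * real (Suc k))"
      using pos qint_nonneg[of q n] q by (intro divide_left_mono) auto
    moreover have "1 - mkz_node q n k = q ^ k * qint q n / qint q (k + n)"
      using pos qint_add[of q n k] by (simp add: mkz_node_def field_simps)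
    moreover have "q ^ k * qint q n / (q ^ k * real (Suc k)) = qint q n / real (Suc k)"
      using q by (intro mult_divide_mult_cancel_left) simp
    ultimately show ?thesis
      by linarith
  qed
  then show "\<forall>\<^sub>F k in sequentially. 1 - qint q n / real (Suc k) \<le> mkz_node q n k"
    by (simp add: algebra_simps)
  show "\<forall>\<^sub>F k in sequentially. mkz_node q n k \<le> 1"
    using q by (simp add: mkz_node_le_1)
  have "(\<lambda>k. qint q n * inverse (real (Suc k))) \<longlonglongrightarrow> qint q n * 0"
    by (intro tendsto_mult tendsto_const LIMSEQ_inverse_real_of_nat)
  from tendsto_diff[OF tendsto_const[of 1] this]
  show "(\<lambda>k. 1 - qint q n / real (Suc k)) \<longlonglongrightarrow> 1"
    by (simp add: divide_inverse)
qed simp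

context
  fixes q t :: real and n :: nat
  assumes q: "0 \<le> q" "q \<le> 1" and t: "0 \<le> t" "t < 1"
begin

lemma mkz_weight_nonneg: "0 \<le> mkz_weight q n t k"
  using mkz_factor_pos[OF q t(2), of n] mkz_coeff_pos[OF q(1), of n k] t
  by (simp add: mkz_weight_def)

lemma mkz_weight_sums: "mkz_weight q n t sums 1"
  using sums_mult[OF mkz_generating_function[OF q t, of n], of "mkz_factor q n t"]
    mkz_factor_pos[OF q t(2), of n]
  by (simp add: mkz_weight_def[abs_def] mult.assoc)

lemma mkz_weight_node_Suc:
  "mkz_weight q n t (Suc k) * mkz_node q n (Suc k) = t * mkz_weight q n t k"
  using mkz_coeff_Suc_right[OF q(1), of k n] qint_pos[OF q(1), of "n + Suc k"]
  by (simp add: mkz_weight_def mkz_node_def field_simps)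

lemma mkz_first_moment: "(\<lambda>k. mkz_weight q n t k * mkz_node q n k) sums t"
proof -
  have "(\<lambda>k. mkz_weight q n t (Suc k) * mkz_node q n (Suc k)) sums t"
    using sums_mult[OF mkz_weight_sums, of t] by (simp add: mkz_weight_node_Suc)
  then show ?thesis
    using sums_Suc_iff[of "\<lambda>k. mkz_weight q n t k * mkz_node q n k" t] by simp
qed

lemma mkz_second_moment:
  "summable (\<lambda>k. mkz_weight q n t k * mkz_node q n k ^ 2)"
  "(\<Sum>k. mkz_weight q n t k * mkz_node q n k ^ 2) \<le> t * (1 / qint q (Suc n) + t)"
proof -
  let ?w = "mkz_weight q n t" and ?x = "mkz_node q n" and ?c = "1 / qint q (Suc n)"
  have upper: "(\<lambda>k. t * (?w k * ?c + ?w k * ?x k)) sums (t * (1 * ?c + t))"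
    by (intro sums_mult sums_add sums_mult2 mkz_weight_sums mkz_first_moment)
  have shift: "?w (Suc k) * ?x (Suc k) ^ 2 \<le> t * (?w k * ?c + ?w k * ?x k)" for k
  proof -
    have "?w (Suc k) * ?x (Suc k) ^ 2 = (?w (Suc k) * ?x (Suc k)) * ?x (Suc k)"
      by (simp add: power2_eq_square)
    also have "\<dots> = t * ?w k * ?x (Suc k)"
      by (simp only: mkz_weight_node_Suc)
    also have "\<dots> \<le> t * ?w k * (?c + ?x k)"
      using mkz_node_Suc_le[OF q] mkz_weight_nonneg t by (intro mult_left_mono) auto
    finally show ?thesis by (simp add: distrib_left mult.assoc)
  qed
  have norm_eq: "norm (?w (Suc k) * ?x (Suc k) ^ 2) = ?w (Suc k) * ?x (Suc k) ^ 2" for k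
    using mkz_weight_nonneg by simp
  have summable_shift: "summable (\<lambda>k. ?w (Suc k) * ?x (Suc k) ^ 2)"
    by (rule summable_comparison_test'[OF sums_summable[OF upper]]) (simp only: norm_eq shift)
  then show summable: "summable (\<lambda>k. ?w k * ?x k ^ 2)"
    using summable_Suc_iff[of "\<lambda>k. ?w k * ?x k ^ 2"] by simp
  have "(\<Sum>k. ?w k * ?x k ^ 2) = (\<Sum>k. ?w (Suc k) * ?x (Suc k) ^ 2)"
    using suminf_split_head[OF summable] by simp
  also have "\<dots> \<le> (\<Sum>k. t * (?w k * ?c + ?w k * ?x k))"
    by (rule suminf_le[OF shift summable_shift sums_summable[OF upper]])
  also have "\<dots> = t * (1 * ?c + t)"
    by (rule sums_unique[OF upper, symmetric])
  finally show "(\<Sum>k. ?w k * ?x k ^ 2) \<le> t * (?c + t)" by simp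
qed

lemma mkz_variance:
  "summable (\<lambda>k. mkz_weight q n t k * (mkz_node q n k - t)\<^sup>2)"
  "(\<Sum>k. mkz_weight q n t k * (mkz_node q n k - t)\<^sup>2) \<le> 1 / qint q (Suc n)"
proof -
  let ?w = "mkz_weight q n t" and ?x = "mkz_node q n"
  have "(\<lambda>k. ?w k * ?x k ^ 2 - 2 * t * (?w k * ?x k) + t\<^sup>2 * ?w k)
      sums ((\<Sum>k. ?w k * ?x k ^ 2) - 2 * t * t + t\<^sup>2 * 1)"
    using mkz_second_moment(1) mkz_first_moment mkz_weight_sums
    by (intro sums_add sums_diff sums_mult) (auto simp: summable_sums)
  then have var: "(\<lambda>k. ?w k * (?x k - t)\<^sup>2) sums ((\<Sum>k. ?w k * ?x k ^ 2) - t\<^sup>2)"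
    by (simp add: power2_eq_square algebra_simps)
  then show "summable (\<lambda>k. ?w k * (?x k - t)\<^sup>2)"
    by (simp add: sums_iff)
  have "t * (1 / qint q (Suc n)) \<le> 1 / qint q (Suc n)"
    using t qint_pos[OF q(1), of "Suc n"] by (intro mult_left_le_one_le) auto
  moreover have "t * (1 / qint q (Suc n) + t) = t * (1 / qint q (Suc n)) + t\<^sup>2"
    by (simp add: power2_eq_square distrib_left)
  ultimately show "(\<Sum>k. ?w k * (?x k - t)\<^sup>2) \<le> 1 / qint q (Suc n)"
    using sums_unique[OF var] mkz_second_moment(2) by linarith
qed

end

section \<open>The quantum MKZ operator\<close>

lemma weighted_sum_dist_le:
  fixes w v :: "nat \<Rightarrow> real"
  assumes w_nonneg: "\<And>k. 0 \<le> w k" and w_sums: "w sums 1"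
    and B: "\<And>k. \<bar>v k - L\<bar> \<le> B" and tail: "\<And>k. K \<le> k \<Longrightarrow> \<bar>v k - L\<bar> \<le> e"
  shows "\<bar>(\<Sum>k. w k * v k) - L\<bar> \<le> B * (\<Sum>k<K. w k) + e"
proof -
  have e: "0 \<le> e"
    using tail[of K] by simp
  define u where "u k = (if k \<in> {..<K} then B * w k else 0) + e * w k" for k
  have u_sums: "u sums ((\<Sum>k<K. B * w k) + e * 1)"
    unfolding u_def by (intro sums_add sums_If_finite_set sums_mult w_sums) simp
  have bound: "norm (w k * (v k - L)) \<le> u k" for k
  proof -
    have "norm (w k * (v k - L)) = w k * \<bar>v k - L\<bar>"
      using w_nonneg[of k] by (simp add: abs_mult)
    also have "\<dots> \<le> w k * (if k < K then B else e)"
      using B[of k] tail[of k] w_nonneg[of k] by (intro mult_left_mono) auto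
    also have "\<dots> \<le> u k"
      using w_nonneg[of k] e by (simp add: u_def mult.commute)
    finally show ?thesis .
  qed
  have "summable (\<lambda>k. w k * (v k - L))"
    using bound by (rule summable_comparison_test'[OF sums_summable[OF u_sums]])
  then have "summable (\<lambda>k. w k * (v k - L) + w k * L)"
    by (intro summable_add summable_mult2 sums_summable[OF w_sums])
  then have "summable (\<lambda>k. w k * v k)"
    by (simp add: right_diff_distrib)
  then have "(\<lambda>k. w k * v k - w k * L) sums ((\<Sum>k. w k * v k) - 1 * L)"
    by (intro sums_diff summable_sums sums_mult2 w_sums)
  then have "(\<lambda>k. w k * (v k - L)) sums ((\<Sum>k. w k * v k) - L)"
    by (simp add: right_diff_distrib)
  from norm_sums_le[OF this u_sums bound] show ?thesis
    by (simp add: sum_distrib_left)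
qed

text \<open>A form of the Silverman--Toeplitz theorem.\<close>

lemma weighted_sum_tendsto:
  fixes w :: "'a \<Rightarrow> nat \<Rightarrow> real" and v :: "nat \<Rightarrow> real"
  assumes w: "\<forall>\<^sub>F s in F. (\<forall>k. 0 \<le> w s k) \<and> w s sums 1"
    and w_tendsto: "\<And>k. ((\<lambda>s. w s k) \<longlongrightarrow> 0) F"
    and v: "v \<longlonglongrightarrow> L"
  shows "((\<lambda>s. \<Sum>k. w s k * v k) \<longlongrightarrow> L) F"
proof (rule tendstoI)
  fix e :: real assume e: "0 < e"
  have "convergent (\<lambda>k. v k - L)"
    using tendsto_diff[OF v tendsto_const[of L]] by (rule convergentI)
  then have "Bseq (\<lambda>k. v k - L)"
    by (rule convergent_imp_Bseq)
  then obtain B where B: "0 < B" "\<And>k. \<bar>v k - L\<bar> \<le> B"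
    by (auto simp: Bseq_def)
  from LIMSEQ_D[OF v, of "e / 2"] e obtain K where K: "\<And>k. K \<le> k \<Longrightarrow> \<bar>v k - L\<bar> < e / 2"
    by auto
  have "((\<lambda>s. \<Sum>k<K. w s k) \<longlongrightarrow> 0) F"
    using w_tendsto by (rule tendsto_null_sum)
  then have "\<forall>\<^sub>F s in F. (\<Sum>k<K. w s k) < e / (2 * B)"
    using e B by (intro order_tendstoD(2)) auto
  then have "\<forall>\<^sub>F s in F. B * (\<Sum>k<K. w s k) < e / 2"
    by (rule eventually_mono) (use B in \<open>auto simp: field_simps\<close>)
  with w show "\<forall>\<^sub>F s in F. dist (\<Sum>k. w s k * v k) L < e"
  proof eventually_elim
    case (elim s)
    then have "\<bar>(\<Sum>k. w s k * v k) - L\<bar> \<le> B * (\<Sum>k<K. w s k) + e / 2"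
      using B(2) K by (intro weighted_sum_dist_le) (auto simp: less_imp_le)
    with elim show ?case
      by (simp add: dist_real_def)
  qed
qed

lemma mkz_point_in_Icc:
  assumes "lo \<le> hi" "0 \<le> q"
  shows "lo + (hi - lo) * mkz_node q n k \<in> {lo..hi}"
  using assms mkz_node_nonneg[of q n k] mkz_node_le_1[of q n k]
    mult_left_le_one_le[of "hi - lo" "mkz_node q n k"]
  by (auto simp: mult.commute[of "hi - lo"])

lemma PMKZ_eq_mkz_factor:
  assumes "lo < hi"
  shows "PMKZ lo hi n q y = mkz_factor q n ((y - lo) / (hi - lo))"
proof -
  have "(\<Prod>j=0..n. hi - lo - q ^ j * (y - lo)) = (\<Prod>j=0..n. (hi - lo) * (1 - q ^ j * ((y - lo) / (hi - lo))))"
    using assms by (intro prod.cong) (auto simp: field_simps)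
  then show ?thesis
    using assms by (simp add: PMKZ_def mkz_factor_def prod.distrib)
qed

lemma MKZ_eq_power_series:
  assumes "z \<noteq> hi"
  shows "MKZ lo hi n q h z = PMKZ lo hi n q z *
    (\<Sum>k. mkz_coeff q n k * h (lo + (hi - lo) * mkz_node q n k) * ((z - lo) / (hi - lo)) ^ k)"
proof -
  have "qbinom q (n + k) k * ((z - lo) / (hi - lo)) ^ k * h (lo + (hi - lo) * qint q k / qint q (k + n))
      = mkz_coeff q n k * h (lo + (hi - lo) * mkz_node q n k) * ((z - lo) / (hi - lo)) ^ k" for k
    unfolding mkz_coeff_def mkz_node_def by (simp only: times_divide_eq_right mult_ac)
  then have "(\<lambda>k. qbinom q (n + k) k * ((z - lo) / (hi - lo)) ^ k *
      h (lo + (hi - lo) * qint q k / qint q (k + n)))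
    = (\<lambda>k. mkz_coeff q n k * h (lo + (hi - lo) * mkz_node q n k) * ((z - lo) / (hi - lo)) ^ k)"
    by (intro ext)
  then show ?thesis
    using assms by (simp add: MKZ_def)
qed

context
  fixes lo hi q :: real and n :: nat
  assumes lohi: "lo < hi" and q: "0 \<le> q" "q \<le> 1"
begin

lemma MKZ_sums:
  assumes y: "lo \<le> y" "y < hi" and h: "bounded (h ` {lo..hi})"
  shows "(\<lambda>k. mkz_weight q n ((y - lo) / (hi - lo)) k * h (lo + (hi - lo) * mkz_node q n k))
           sums MKZ lo hi n q h y"
proof -
  define t where "t = (y - lo) / (hi - lo)"
  have t: "0 \<le> t" "t < 1"
    using lohi y by (auto simp: t_def divide_simps)
  obtain H where H: "\<forall>z\<in>{lo..hi}. \<bar>h z\<bar> \<le> H"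
    using h by (auto simp: bounded_real)
  let ?g = "\<lambda>k. mkz_coeff q n k * t ^ k * h (lo + (hi - lo) * mkz_node q n k)"
  have "norm (?g k) \<le> H * (mkz_coeff q n k * t ^ k)" for k
  proof -
    have "norm (?g k) = (mkz_coeff q n k * t ^ k) * \<bar>h (lo + (hi - lo) * mkz_node q n k)\<bar>"
      using mkz_coeff_pos[OF q(1), of n k] t by (simp add: abs_mult)
    also have "\<dots> \<le> (mkz_coeff q n k * t ^ k) * H"
      using H mkz_point_in_Icc[OF less_imp_le[OF lohi] q(1)] mkz_coeff_pos[OF q(1), of n k] t
      by (intro mult_left_mono) auto
    finally show ?thesis
      by (simp only: mult.commute)
  qed
  then have "summable ?g"
    by (rule summable_comparison_test'[OF summable_mult[OF sums_summable[OF mkz_generating_function[OF q t]]]])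
  then have "(\<lambda>k. mkz_factor q n t * ?g k) sums (mkz_factor q n t * suminf ?g)"
    by (intro sums_mult summable_sums)
  moreover have "MKZ lo hi n q h y = mkz_factor q n t * suminf ?g"
    using y lohi by (simp add: MKZ_def PMKZ_eq_mkz_factor t_def mkz_coeff_def mkz_node_def)
  ultimately show ?thesis
    by (simp add: mkz_weight_def t_def mult.assoc)
qed

lemma MKZ_left_endpoint:
  assumes "bounded (h ` {lo..hi})"
  shows "MKZ lo hi n q h lo = h lo"
proof -
  have "(\<lambda>k. mkz_weight q n 0 k * h (lo + (hi - lo) * mkz_node q n k)) = (\<lambda>k. if k = 0 then h lo else 0)"
    using q by (auto simp: fun_eq_iff mkz_weight_def mkz_factor_def)
  then have "(\<lambda>k. if k = 0 then h lo else 0) sums MKZ lo hi n q h lo"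
    using MKZ_sums[OF order.refl lohi assms] by simp
  then show ?thesis
    using sums_single[of 0 "\<lambda>_. h lo"] by (simp add: sums_iff)
qed

lemma MKZ_average:
  assumes y: "y \<in> {lo..hi}"
  obtains w p where "\<And>k. 0 \<le> w k" "w sums 1" "\<And>k. p k \<in> {lo..hi}"
    "\<And>h. continuous_on {lo..hi} h \<Longrightarrow> (\<lambda>k. w k * h (p k)) sums MKZ lo hi n q h y"
proof (cases "y = hi")
  case True
  have eq: "(\<lambda>k. (if k = 0 then 1 else 0) * h hi) = (\<lambda>k. if k = 0 then h hi else 0)"
    for h :: "real \<Rightarrow> real"
    by (simp add: fun_eq_iff)
  have "MKZ lo hi n q h y = h hi" for h
    using True by (simp add: MKZ_def)
  then have "(\<lambda>k. (if k = 0 then 1 else 0) * h hi) sums MKZ lo hi n q h y" for h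
    unfolding eq using sums_single[of 0 "\<lambda>_. h hi"] by simp
  show ?thesis
  proof (rule that[of "\<lambda>k. if k = 0 then 1 else 0" "\<lambda>_. hi"])
    show "(\<lambda>k. if k = 0 then 1 else 0 :: real) sums 1"
      using sums_single[of 0 "\<lambda>_. 1 :: real"] by simp
    show "(\<lambda>k. (if k = 0 then 1 else 0) * h hi) sums MKZ lo hi n q h y" for h
      by fact
  qed (use lohi in auto)
next
  case False
  define t where "t = (y - lo) / (hi - lo)"
  have t: "0 \<le> t" "t < 1"
    using lohi y False by (auto simp: t_def divide_simps)
  show ?thesis
  proof (rule that[of "mkz_weight q n t" "\<lambda>k. lo + (hi - lo) * mkz_node q n k"])
    show "0 \<le> mkz_weight q n t k" "mkz_weight q n t sums 1" for k
      using mkz_weight_nonneg[OF q t] mkz_weight_sums[OF q t] by auto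
    show "lo + (hi - lo) * mkz_node q n k \<in> {lo..hi}" for k
      using lohi q by (intro mkz_point_in_Icc) auto
    show "(\<lambda>k. mkz_weight q n t k * h (lo + (hi - lo) * mkz_node q n k)) sums MKZ lo hi n q h y"
      if "continuous_on {lo..hi} h" for h
      using MKZ_sums[of y h] y False compact_imp_bounded[OF compact_continuous_image[OF that compact_Icc]]
      by (simp add: t_def)
  qed
qed

lemma MKZ_const:
  assumes "y \<in> {lo..hi}"
  shows "MKZ lo hi n q (\<lambda>_. c) y = c"
proof -
  obtain w p where w: "\<And>k. 0 \<le> w k" "w sums 1" and p: "\<And>k. p k \<in> {lo..hi}"
    and avg: "\<And>h. continuous_on {lo..hi} h \<Longrightarrow> (\<lambda>k. w k * h (p k)) sums MKZ lo hi n q h y"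
    using MKZ_average[OF assms] by blast
  from sums_mult2[OF w(2), of c] show ?thesis
    using sums_unique2[OF avg[OF continuous_on_const]] by simp
qed

lemma MKZ_diff:
  assumes "y \<in> {lo..hi}" "continuous_on {lo..hi} h1" "continuous_on {lo..hi} h2"
  shows "MKZ lo hi n q (\<lambda>z. h1 z - h2 z) y = MKZ lo hi n q h1 y - MKZ lo hi n q h2 y"
proof -
  obtain w p where w: "\<And>k. 0 \<le> w k" "w sums 1" and p: "\<And>k. p k \<in> {lo..hi}"
    and avg: "\<And>h. continuous_on {lo..hi} h \<Longrightarrow> (\<lambda>k. w k * h (p k)) sums MKZ lo hi n q h y"
    using MKZ_average[OF assms(1)] by blast
  have "(\<lambda>k. w k * h1 (p k) - w k * h2 (p k)) sums (MKZ lo hi n q h1 y - MKZ lo hi n q h2 y)"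
    using assms by (intro sums_diff avg)
  moreover have "(\<lambda>k. w k * (h1 (p k) - h2 (p k))) sums MKZ lo hi n q (\<lambda>z. h1 z - h2 z) y"
    using assms by (intro avg continuous_intros)
  ultimately show ?thesis
    by (simp add: right_diff_distrib sums_iff)
qed

lemma MKZ_affine:
  assumes "y \<in> {lo..hi}" "continuous_on {lo..hi} h"
  shows "MKZ lo hi n q (\<lambda>z. a + b * h z) y = a + b * MKZ lo hi n q h y"
proof -
  obtain w p where w: "\<And>k. 0 \<le> w k" "w sums 1" and p: "\<And>k. p k \<in> {lo..hi}"
    and avg: "\<And>h. continuous_on {lo..hi} h \<Longrightarrow> (\<lambda>k. w k * h (p k)) sums MKZ lo hi n q h y"
    using MKZ_average[OF assms(1)] by blast
  have "(\<lambda>k. w k * a + b * (w k * h (p k))) sums (1 * a + b * MKZ lo hi n q h y)"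
    using assms w(2) by (intro sums_add sums_mult sums_mult2 avg)
  moreover have "(\<lambda>k. w k * (a + b * h (p k))) sums MKZ lo hi n q (\<lambda>z. a + b * h z) y"
    using assms by (intro avg continuous_intros)
  ultimately show ?thesis
    by (simp add: distrib_left mult.left_commute sums_iff)
qed

lemma MKZ_abs_le:
  assumes y: "y \<in> {lo..hi}" and hc: "continuous_on {lo..hi} h" and gc: "continuous_on {lo..hi} g"
    and le: "\<And>z. z \<in> {lo..hi} \<Longrightarrow> \<bar>h z\<bar> \<le> g z"
  shows "\<bar>MKZ lo hi n q h y\<bar> \<le> MKZ lo hi n q g y"
proof -
  obtain w p where w: "\<And>k. 0 \<le> w k" "w sums 1" and p: "\<And>k. p k \<in> {lo..hi}"
    and avg: "\<And>h. continuous_on {lo..hi} h \<Longrightarrow> (\<lambda>k. w k * h (p k)) sums MKZ lo hi n q h y"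
    using MKZ_average[OF y] by blast
  have "norm (w k * h (p k)) \<le> w k * g (p k)" for k
    using w(1)[of k] le[OF p] by (simp add: abs_mult mult_left_mono)
  then show ?thesis
    using norm_sums_le[OF avg[OF hc] avg[OF gc]] by simp
qed

lemma MKZ_nonneg:
  assumes y: "y \<in> {lo..hi}" and hc: "continuous_on {lo..hi} h"
    and nonneg: "\<And>z. z \<in> {lo..hi} \<Longrightarrow> 0 \<le> h z"
  shows "0 \<le> MKZ lo hi n q h y"
  using MKZ_abs_le[OF y continuous_on_const hc, of 0] nonneg by simp

lemma MKZ_second_moment:
  assumes y: "y \<in> {lo..hi}"
  shows "MKZ lo hi n q (\<lambda>z. (z - y)\<^sup>2) y \<le> (hi - lo)\<^sup>2 / qint q (Suc n)"
proof (cases "y = hi")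
  case True
  then show ?thesis
    using qint_pos[OF q(1), of "Suc n"] by (simp add: MKZ_def)
next
  case False
  define t where "t = (y - lo) / (hi - lo)"
  have t: "0 \<le> t" "t < 1"
    using lohi y False by (auto simp: t_def divide_simps)
  have "bounded ((\<lambda>z. (z - y)\<^sup>2) ` {lo..hi})"
    by (intro compact_imp_bounded compact_continuous_image continuous_intros) auto
  then have "(\<lambda>k. mkz_weight q n t k * (lo + (hi - lo) * mkz_node q n k - y)\<^sup>2)
      sums MKZ lo hi n q (\<lambda>z. (z - y)\<^sup>2) y"
    using MKZ_sums[of y "\<lambda>z. (z - y)\<^sup>2"] y False by (simp add: t_def)
  moreover have "(lo + (hi - lo) * mkz_node q n k - y)\<^sup>2 = (hi - lo)\<^sup>2 * (mkz_node q n k - t)\<^sup>2" for k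
    using lohi by (simp add: t_def power_mult_distrib[symmetric] field_simps)
  ultimately have "(\<lambda>k. (hi - lo)\<^sup>2 * (mkz_weight q n t k * (mkz_node q n k - t)\<^sup>2))
      sums MKZ lo hi n q (\<lambda>z. (z - y)\<^sup>2) y"
    by (simp add: mult.left_commute)
  moreover have "(\<lambda>k. (hi - lo)\<^sup>2 * (mkz_weight q n t k * (mkz_node q n k - t)\<^sup>2))
      sums ((hi - lo)\<^sup>2 * (\<Sum>k. mkz_weight q n t k * (mkz_node q n k - t)\<^sup>2))"
    using mkz_variance(1)[OF q t] by (intro sums_mult summable_sums)
  ultimately have "MKZ lo hi n q (\<lambda>z. (z - y)\<^sup>2) y
      = (hi - lo)\<^sup>2 * (\<Sum>k. mkz_weight q n t k * (mkz_node q n k - t)\<^sup>2)"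
    by (rule sums_unique2)
  then show ?thesis
    using mult_left_mono[OF mkz_variance(2)[OF q t, of n], of "(hi - lo)\<^sup>2"] by simp
qed

lemma MKZ_approx_le:
  assumes y: "y \<in> {lo..hi}" and hc: "continuous_on {lo..hi} h"
    and H: "\<And>z. z \<in> {lo..hi} \<Longrightarrow> \<bar>h z\<bar> \<le> H" and \<delta>: "0 < \<delta>"
    and close: "\<And>z. z \<in> {lo..hi} \<Longrightarrow> \<bar>z - y\<bar> < \<delta> \<Longrightarrow> \<bar>h z - h y\<bar> \<le> \<epsilon>"
  shows "\<bar>MKZ lo hi n q h y - h y\<bar> \<le> \<epsilon> + 2 * H / \<delta>\<^sup>2 * (hi - lo)\<^sup>2 / qint q (Suc n)"
proof -
  define c where "c = 2 * H / \<delta>\<^sup>2"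
  have c: "0 \<le> c"
    using H[OF y] by (simp add: c_def)
  have \<epsilon>: "0 \<le> \<epsilon>"
    using close[OF y] \<delta> by simp
  have pointwise: "\<bar>h z - h y\<bar> \<le> \<epsilon> + c * (z - y)\<^sup>2" if z: "z \<in> {lo..hi}" for z
  proof (cases "\<bar>z - y\<bar> < \<delta>")
    case True
    then show ?thesis using close[OF z] c by (simp add: add_increasing2)
  next
    case False
    then have "\<delta>\<^sup>2 \<le> (z - y)\<^sup>2"
      using \<delta> by (metis abs_le_square_iff abs_of_pos not_less)
    then have "2 * H * \<delta>\<^sup>2 \<le> 2 * H * (z - y)\<^sup>2"
      using H[OF y] by (intro mult_left_mono) auto
    then have "2 * H \<le> c * (z - y)\<^sup>2"
      using \<delta> by (simp add: c_def field_simps)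
    then show ?thesis
      using H[OF z] H[OF y] \<epsilon> by linarith
  qed
  have "\<bar>MKZ lo hi n q h y - h y\<bar> = \<bar>MKZ lo hi n q (\<lambda>z. h z - h y) y\<bar>"
    using MKZ_diff[OF y hc continuous_on_const] MKZ_const[OF y] by simp
  also have "\<dots> \<le> MKZ lo hi n q (\<lambda>z. \<epsilon> + c * (z - y)\<^sup>2) y"
    using pointwise hc by (intro MKZ_abs_le[OF y] continuous_intros)
  also have "\<dots> = \<epsilon> + c * MKZ lo hi n q (\<lambda>z. (z - y)\<^sup>2) y"
    by (intro MKZ_affine[OF y] continuous_intros)
  also have "\<dots> \<le> \<epsilon> + c * ((hi - lo)\<^sup>2 / qint q (Suc n))"
    using mult_left_mono[OF MKZ_second_moment[OF y] c] by simp
  finally show ?thesis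
    by (simp add: c_def)
qed

lemma MKZ_isCont:
  assumes y: "lo \<le> y" "y < hi" and h: "bounded (h ` {lo..hi})"
  shows "isCont (MKZ lo hi n q h) y"
proof -
  obtain H where H: "\<forall>z\<in>{lo..hi}. \<bar>h z\<bar> \<le> H"
    using h by (auto simp: bounded_real)
  define c where "c k = mkz_coeff q n k * h (lo + (hi - lo) * mkz_node q n k)" for k
  define s where "s y = (y - lo) / (hi - lo)" for y
  define E where "E y = PMKZ lo hi n q y * (\<Sum>k. c k * s y ^ k)" for y
  define K where "K = (1 + s y) / 2"
  have "0 \<le> s y" "s y < 1"
    using lohi y by (auto simp: s_def divide_simps)
  then have K: "0 \<le> K" "K < 1" "\<bar>s y\<bar> < \<bar>K\<bar>"
    by (auto simp: K_def)
  have bound: "norm (c k * K ^ k) \<le> H * (mkz_coeff q n k * K ^ k)" for k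
  proof -
    have "norm (c k * K ^ k) = (mkz_coeff q n k * K ^ k) * \<bar>h (lo + (hi - lo) * mkz_node q n k)\<bar>"
      using mkz_coeff_pos[OF q(1), of n k] K by (simp add: c_def abs_mult)
    also have "\<dots> \<le> (mkz_coeff q n k * K ^ k) * H"
      using H mkz_point_in_Icc[OF less_imp_le[OF lohi] q(1)] mkz_coeff_pos[OF q(1), of n k] K
      by (intro mult_left_mono) auto
    finally show ?thesis
      by (simp only: mult.commute)
  qed
  have "summable (\<lambda>k. mkz_coeff q n k * K ^ k)"
    using mkz_generating_function[OF q K(1,2)] by (rule sums_summable)
  then have "summable (\<lambda>k. c k * K ^ k)"
    using bound by (rule summable_comparison_test'[OF summable_mult])
  then have "isCont (\<lambda>t. \<Sum>k. c k * t ^ k) (s y)"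
    using K(3) by (intro isCont_powser) simp_all
  moreover have "isCont s y"
    unfolding s_def by (intro continuous_intros) (use lohi in auto)
  ultimately have "isCont (\<lambda>y. \<Sum>k. c k * s y ^ k) y"
    using isCont_o2[of y s] by blast
  then have "isCont E y"
    unfolding E_def PMKZ_def by (intro continuous_intros) (use lohi in auto)
  moreover have "\<forall>\<^sub>F z in nhds y. z \<in> {..<hi}"
    using y by (intro eventually_nhds_in_open) auto
  then have "\<forall>\<^sub>F z in nhds y. MKZ lo hi n q h z = E z"
    by (rule eventually_mono) (simp add: MKZ_eq_power_series E_def c_def s_def)
  ultimately show ?thesis
    using isCont_cong by auto
qed

text \<open>At \<open>x\<^sub>N\<close> the power series representation breaks down. Instead, the weight of every fixed
  node tends to \<open>0\<close> as \<open>t \<rightarrow> 1\<close>, while the nodes themselves tend to \<open>x\<^sub>N\<close>.\<close>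

lemma MKZ_tendsto_right_endpoint:
  assumes q_pos: "0 < q" and n: "0 < n" and hc: "continuous_on {lo..hi} h"
  shows "(MKZ lo hi n q h \<longlongrightarrow> h hi) (at_left hi)"
proof -
  let ?t = "\<lambda>y. (y - lo) / (hi - lo)" and ?p = "\<lambda>k. lo + (hi - lo) * mkz_node q n k"
  have near: "\<forall>\<^sub>F y in at_left hi. y \<in> {lo<..<hi}"
    using eventually_at_left_real[OF lohi] .
  have lim: "((\<lambda>y. \<Sum>k. mkz_weight q n (?t y) k * h (?p k)) \<longlongrightarrow> h hi) (at_left hi)"
  proof (rule weighted_sum_tendsto)
    show "\<forall>\<^sub>F y in at_left hi. (\<forall>k. 0 \<le> mkz_weight q n (?t y) k) \<and> mkz_weight q n (?t y) sums 1"
      using near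
    proof eventually_elim
      case (elim y)
      then have "0 \<le> ?t y" "?t y < 1"
        using lohi by (auto simp: divide_simps)
      then show ?case
        using mkz_weight_nonneg[OF q] mkz_weight_sums[OF q] by blast
    qed
    show "((\<lambda>y. mkz_weight q n (?t y) k) \<longlongrightarrow> 0) (at_left hi)" for k
    proof -
      have "isCont (\<lambda>y. mkz_weight q n (?t y) k) hi"
        unfolding mkz_weight_def mkz_factor_def by (intro continuous_intros) (use lohi in auto)
      then have "((\<lambda>y. mkz_weight q n (?t y) k) \<longlongrightarrow> mkz_weight q n 1 k) (at hi)"
        using lohi by (simp add: isCont_def)
      then show ?thesis
        by (simp add: mkz_weight_def filterlim_at_split)
    qed
    have "(?p \<longlongrightarrow> lo + (hi - lo) * 1) sequentially"
      by (intro tendsto_intros mkz_node_tendsto q_pos q(2) n)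
    then show "(\<lambda>k. h (?p k)) \<longlonglongrightarrow> h hi"
      using lohi q
      by (intro continuous_on_tendsto_compose[OF hc] always_eventually allI mkz_point_in_Icc) auto
  qed
  have ev: "\<forall>\<^sub>F y in at_left hi. (\<Sum>k. mkz_weight q n (?t y) k * h (?p k)) = MKZ lo hi n q h y"
    using near
  proof eventually_elim
    case (elim y)
    have "bounded (h ` {lo..hi})"
      by (intro compact_imp_bounded compact_continuous_image hc compact_Icc)
    then show ?case
      using MKZ_sums[of y h] elim by (simp add: sums_iff)
  qed
  show ?thesis
    using tendsto_cong[OF ev] lim by simp
qed

lemma MKZ_continuous_on:
  assumes "0 < q" "0 < n" and hc: "continuous_on {lo..hi} h"
  shows "continuous_on {lo..hi} (MKZ lo hi n q h)"
  unfolding continuous_on_eq_continuous_within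
proof
  fix y assume y: "y \<in> {lo..hi}"
  show "continuous (at y within {lo..hi}) (MKZ lo hi n q h)"
  proof (cases "y = hi")
    case True
    have "MKZ lo hi n q h hi = h hi"
      by (simp add: MKZ_def)
    then have "(MKZ lo hi n q h \<longlongrightarrow> MKZ lo hi n q h hi) (at hi within {lo..hi})"
      using MKZ_tendsto_right_endpoint[OF assms] by (simp only: at_within_Icc_at_left[OF lohi])
    then show ?thesis
      using True by (simp only: continuous_within)
  next
    case False
    have "isCont (MKZ lo hi n q h) y"
      using y False compact_imp_bounded[OF compact_continuous_image[OF hc compact_Icc]]
      by (intro MKZ_isCont) auto
    then show ?thesis
      by (rule continuous_at_imp_continuous_within)
  qed
qed

end

lemma MKZ_uniform_limit:
  fixes q :: "nat \<Rightarrow> real"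
  assumes lohi: "lo < hi" and q_lim: "q \<longlonglongrightarrow> 1"
    and q_range: "\<forall>\<^sub>F n in sequentially. 0 \<le> q n \<and> q n \<le> 1"
    and hc: "continuous_on {lo..hi} h"
  shows "uniform_limit {lo..hi} (\<lambda>n. MKZ lo hi n (q n) h) h sequentially"
proof (rule uniform_limitI)
  fix e :: real assume e: "0 < e"
  obtain H where H: "\<forall>z\<in>{lo..hi}. \<bar>h z\<bar> \<le> H"
    using compact_imp_bounded[OF compact_continuous_image[OF hc compact_Icc]]
    by (auto simp: bounded_real)
  obtain \<delta> where \<delta>: "0 < \<delta>"
    and uc: "\<And>y z. y \<in> {lo..hi} \<Longrightarrow> z \<in> {lo..hi} \<Longrightarrow> dist z y < \<delta> \<Longrightarrow> dist (h z) (h y) < e / 2"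
    using uniformly_continuous_onE[OF compact_uniformly_continuous[OF hc compact_Icc] half_gt_zero[OF e]]
    by blast
  define A where "A = 2 * H / \<delta>\<^sup>2 * (hi - lo)\<^sup>2"
  have "\<forall>\<^sub>F n in sequentially. 2 * A / e + 1 \<le> qint (q n) (Suc n)"
    using qint_Suc_tendsto_at_top[OF q_lim q_range] by (simp add: filterlim_at_top)
  with q_range show "\<forall>\<^sub>F n in sequentially. \<forall>y\<in>{lo..hi}. dist (MKZ lo hi n (q n) h y) (h y) < e"
  proof eventually_elim
    case (elim n)
    have Q: "0 < qint (q n) (Suc n)"
      using elim qint_pos by simp
    have less: "e / 2 + A / qint (q n) (Suc n) < e"
      using elim(2) Q e by (simp add: field_simps)
    have le: "\<bar>MKZ lo hi n (q n) h y - h y\<bar> \<le> e / 2 + A / qint (q n) (Suc n)"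
      if y: "y \<in> {lo..hi}" for y
    proof -
      have qn: "0 \<le> q n" "q n \<le> 1"
        using elim(1) by auto
      have close: "\<bar>h z - h y\<bar> \<le> e / 2" if "z \<in> {lo..hi}" "\<bar>z - y\<bar> < \<delta>" for z
        using uc[OF y that(1)] that(2) by (simp add: dist_real_def)
      show ?thesis
        using MKZ_approx_le[OF lohi qn y hc bspec[OF H] \<delta> close] by (simp add: A_def)
    qed
    show ?case
      unfolding dist_real_def using le less by (blast intro: le_less_trans)
  qed
qed

section \<open>Self-referential equations on a partition\<close>

locale affine_partition =
  fixes x :: "nat \<Rightarrow> real" and N :: nat and a b :: "nat \<Rightarrow> real"
  assumes N: "2 \<le> N"
    and partition: "\<forall>i\<in>{1..<N}. x i < x (Suc i)"
    and maps_left: "\<forall>i\<in>{1..N-1}. a i * x 1 + b i = x i"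
    and maps_right: "\<forall>i\<in>{1..N-1}. a i * x N + b i = x (i + 1)"
begin

lemma x_mono:
  assumes "1 \<le> i" "i \<le> j" "j \<le> N"
  shows "x i \<le> x j"
  using assms(2)
proof (induction j rule: dec_induct)
  case (step m)
  then have "m \<in> {1..<N}"
    using assms by auto
  then have "x m < x (Suc m)"
    using partition by blast
  with step.IH show ?case
    by simp
qed simp

lemma x_first_less_last: "x 1 < x N"
proof -
  have "x 1 < x 2"
    using partition N by (simp add: numeral_2_eq_2)
  also have "x 2 \<le> x N"
    using x_mono[of 2 N] N by simp
  finally show ?thesis .
qed

lemma affine_map_first: "i \<in> {1..N-1} \<Longrightarrow> a i * x 1 + b i = x i"
  using maps_left by blast

lemma affine_map_last: "i \<in> {1..N-1} \<Longrightarrow> a i * x N + b i = x (Suc i)"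
  using maps_right by auto

lemma subinterval_subset: "i \<in> {1..N-1} \<Longrightarrow> {x i..x (Suc i)} \<subseteq> {x 1..x N}"
  using x_mono[of 1 i] x_mono[of "Suc i" N] by auto

lemma slope_pos: "i \<in> {1..N-1} \<Longrightarrow> 0 < a i"
proof -
  assume i: "i \<in> {1..N-1}"
  have "a i * (x N - x 1) = x (Suc i) - x i"
    using affine_map_first[OF i] affine_map_last[OF i] by (simp add: algebra_simps)
  moreover have "x i < x (Suc i)"
    using partition i by auto
  ultimately have "0 < a i * (x N - x 1)"
    by simp
  then show ?thesis
    using x_first_less_last by (simp add: zero_less_mult_iff)
qed

lemma affine_map_mem:
  assumes i: "i \<in> {1..N-1}" and y: "y \<in> {x 1..x N}"
  shows "a i * y + b i \<in> {x i..x (Suc i)}"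
proof -
  have "a i * x 1 \<le> a i * y" "a i * y \<le> a i * x N"
    using slope_pos[OF i] y by auto
  then show ?thesis
    using affine_map_first[OF i] affine_map_last[OF i] by auto
qed

lemma affine_map_mem_Icc: "i \<in> {1..N-1} \<Longrightarrow> y \<in> {x 1..x N} \<Longrightarrow> a i * y + b i \<in> {x 1..x N}"
  using affine_map_mem subinterval_subset by blast

lemma affine_map_inverse:
  assumes i: "i \<in> {1..N-1}" and z: "z \<in> {x i..x (Suc i)}"
  shows "(z - b i) / a i \<in> {x 1..x N}" "a i * ((z - b i) / a i) + b i = z"
  using slope_pos[OF i] affine_map_first[OF i] affine_map_last[OF i] z by (auto simp: field_simps)

lemma Icc_eq_UN_subintervals: "{x 1..x N} = (\<Union>i\<in>{1..N-1}. {x i..x (Suc i)})"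
proof
  show "(\<Union>i\<in>{1..N-1}. {x i..x (Suc i)}) \<subseteq> {x 1..x N}"
    using subinterval_subset by blast
  show "{x 1..x N} \<subseteq> (\<Union>i\<in>{1..N-1}. {x i..x (Suc i)})"
  proof
    fix z assume z: "z \<in> {x 1..x N}"
    define S where "S = {i \<in> {1..N-1}. x i \<le> z}"
    define i where "i = Max S"
    have "finite S" "1 \<in> S"
      using z N by (auto simp: S_def)
    then have "i \<in> S"
      unfolding i_def by (intro Max_in) auto
    then have i: "i \<in> {1..N-1}" "x i \<le> z"
      by (auto simp: S_def)
    have i_max: "j \<le> i" if "j \<in> S" for j
      unfolding i_def using Max_ge[OF \<open>finite S\<close> that] .
    have "z \<le> x (Suc i)"
    proof (cases "Suc i = N")
      case False
      then have "Suc i \<in> {1..N-1}"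
        using i(1) by auto
      moreover have "Suc i \<notin> S"
        using i_max[of "Suc i"] by auto
      ultimately show ?thesis
        by (auto simp: S_def)
    qed (use z in auto)
    then show "z \<in> (\<Union>i\<in>{1..N-1}. {x i..x (Suc i)})"
      using i by auto
  qed
qed

lemma Icc_covered_by_affine_maps:
  assumes "z \<in> {x 1..x N}"
  obtains i y where "i \<in> {1..N-1}" "y \<in> {x 1..x N}" "z = a i * y + b i"
proof -
  obtain i where i: "i \<in> {1..N-1}" and z: "z \<in> {x i..x (Suc i)}"
    using assms unfolding Icc_eq_UN_subintervals by blast
  show ?thesis
    using that[OF i affine_map_inverse(1)[OF i z]] affine_map_inverse(2)[OF i z] by simp
qed

lemma scaling_bound_nonneg:
  fixes \<alpha> :: "nat \<Rightarrow> real \<Rightarrow> real"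
  assumes "\<forall>i\<in>{1..N-1}. \<forall>y\<in>{x 1..x N}. \<bar>\<alpha> i y\<bar> \<le> c"
  shows "0 \<le> c"
proof -
  have "\<bar>\<alpha> 1 (x 1)\<bar> \<le> c"
    using assms N x_first_less_last by simp
  then show ?thesis
    using abs_ge_zero[of "\<alpha> 1 (x 1)"] by linarith
qed

text \<open>A maximum principle: the maximum of \<open>\<phi>\<close> is attained at some \<open>u\<^sub>i(y)\<close>.\<close>

lemma self_referential_bound:
  fixes \<phi> :: "real \<Rightarrow> real"
  assumes cont: "continuous_on {x 1..x N} \<phi>" and c: "0 \<le> c" "c < 1"
    and step: "\<And>i y. i \<in> {1..N-1} \<Longrightarrow> y \<in> {x 1..x N} \<Longrightarrow> \<phi> (a i * y + b i) \<le> c * \<phi> y + E"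
    and z: "z \<in> {x 1..x N}"
  shows "\<phi> z \<le> E / (1 - c)"
proof -
  obtain z0 where z0: "z0 \<in> {x 1..x N}" and max: "\<And>y. y \<in> {x 1..x N} \<Longrightarrow> \<phi> y \<le> \<phi> z0"
    using continuous_attains_sup[OF compact_Icc _ cont] z by auto
  obtain i y where i: "i \<in> {1..N-1}" and y: "y \<in> {x 1..x N}" and z0_eq: "z0 = a i * y + b i"
    using Icc_covered_by_affine_maps[OF z0] .
  have "\<phi> z0 \<le> c * \<phi> z0 + E"
    using step[OF i y] mult_left_mono[OF max[OF y] c(1)] z0_eq by simp
  then have "\<phi> z0 \<le> E / (1 - c)"
    using c by (simp add: field_simps)
  then show ?thesis
    using max[OF z] by simp
qed

end

locale fractal_equation = affine_partition +
  fixes \<alpha> :: "nat \<Rightarrow> real \<Rightarrow> real" and h B :: "real \<Rightarrow> real" and c :: real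
  assumes h_cont: "continuous_on {x 1..x N} h"
    and B_cont: "continuous_on {x 1..x N} B"
    and B_first: "B (x 1) = h (x 1)" and B_last: "B (x N) = h (x N)"
    and \<alpha>_cont: "\<And>i. i \<in> {1..N-1} \<Longrightarrow> continuous_on {x 1..x N} (\<alpha> i)"
    and \<alpha>_bound: "\<And>i y. i \<in> {1..N-1} \<Longrightarrow> y \<in> {x 1..x N} \<Longrightarrow> \<bar>\<alpha> i y\<bar> \<le> c"
    and c_less_1: "c < 1"
begin

lemma c_nonneg: "0 \<le> c"
  using \<alpha>_bound by (intro scaling_bound_nonneg[of \<alpha>]) blast

definition fractal_solution :: "(real \<Rightarrow> real) \<Rightarrow> bool" where
  "fractal_solution g \<longleftrightarrow> continuous_on {x 1..x N} g \<and> (\<forall>y. y \<notin> {x 1..x N} \<longrightarrow> g y = 0) \<and>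
     (\<forall>i\<in>{1..N-1}. \<forall>y\<in>{x 1..x N}. g (a i * y + b i) = h (a i * y + b i) + \<alpha> i y * (g y - B y))"

lemma fractal_solution_eq:
  "fractal_solution g \<Longrightarrow> i \<in> {1..N-1} \<Longrightarrow> y \<in> {x 1..x N} \<Longrightarrow>
    g (a i * y + b i) = h (a i * y + b i) + \<alpha> i y * (g y - B y)"
  unfolding fractal_solution_def by blast

lemma fractal_solution_continuous: "fractal_solution g \<Longrightarrow> continuous_on {x 1..x N} g"
  unfolding fractal_solution_def by blast

definition admissible :: "(real \<Rightarrow> real) \<Rightarrow> bool" where
  "admissible g \<longleftrightarrow> continuous_on {x 1..x N} g \<and> g (x 1) = h (x 1) \<and> g (x N) = h (x N) \<and>
     (\<forall>z. z \<notin> {x 1..x N} \<longrightarrow> g z = 0)"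

text \<open>The Read--Bajraktarevic operator. At a node shared by two subintervals the left one is
  used; for admissible \<open>g\<close> both choices give the same value (\<open>rb_operator_eq\<close>).\<close>

definition rb_operator :: "(real \<Rightarrow> real) \<Rightarrow> real \<Rightarrow> real" where
  "rb_operator g z = (if z \<in> {x 1..x N} then
     (let i = LEAST i. i \<in> {1..N-1} \<and> z \<in> {x i..x (Suc i)}; y = (z - b i) / a i
      in h z + \<alpha> i y * (g y - B y)) else 0)"

lemma rb_operator_eq:
  assumes g: "g (x 1) = h (x 1)" "g (x N) = h (x N)"
    and i: "i \<in> {1..N-1}" and y: "y \<in> {x 1..x N}"
  shows "rb_operator g (a i * y + b i) = h (a i * y + b i) + \<alpha> i y * (g y - B y)"
proof -
  define z where "z = a i * y + b i"
  define j where "j = (LEAST j. j \<in> {1..N-1} \<and> z \<in> {x j..x (Suc j)})"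
  have zi: "z \<in> {x i..x (Suc i)}"
    using affine_map_mem[OF i y] by (simp add: z_def)
  have j: "j \<in> {1..N-1}" "z \<in> {x j..x (Suc j)}" "j \<le> i"
    using LeastI[of "\<lambda>j. j \<in> {1..N-1} \<and> z \<in> {x j..x (Suc j)}" i]
      Least_le[of "\<lambda>j. j \<in> {1..N-1} \<and> z \<in> {x j..x (Suc j)}" i] i zi
    unfolding j_def by auto
  have a_pos: "0 < a i" "0 < a j"
    using slope_pos i j(1) by auto
  have T: "rb_operator g z = h z + \<alpha> j ((z - b j) / a j) * (g ((z - b j) / a j) - B ((z - b j) / a j))"
    using zi subinterval_subset[OF i] unfolding rb_operator_def j_def Let_def by auto
  show ?thesis
  proof (cases "j = i")
    case True
    then show ?thesis
      using T a_pos by (simp add: z_def)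
  next
    case False
    then have "x (Suc j) \<le> x i"
      using j i by (intro x_mono) auto
    then have z_nodes: "z = x i" "z = x (Suc j)"
      using zi j(2) by auto
    then have "a i * y + b i = a i * x 1 + b i"
      using affine_map_first[OF i] by (simp add: z_def)
    then have "y = x 1"
      using a_pos by simp
    moreover have "(z - b j) / a j = x N"
      using z_nodes affine_map_last[OF j(1)] a_pos by (auto simp: field_simps)
    ultimately show ?thesis
      using T g B_first B_last by (simp add: z_def)
  qed
qed

lemma rb_operator_admissible:
  assumes g: "admissible g"
  shows "admissible (rb_operator g)"
proof -
  have g_ends: "g (x 1) = h (x 1)" "g (x N) = h (x N)" and g_cont: "continuous_on {x 1..x N} g"
    using g by (auto simp: admissible_def)
  have piece: "continuous_on {x i..x (Suc i)} (rb_operator g)" if i: "i \<in> {1..N-1}" for i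
  proof -
    define v where "v z = (z - b i) / a i" for z
    have v_maps: "v ` {x i..x (Suc i)} \<subseteq> {x 1..x N}"
      using affine_map_inverse(1)[OF i] by (auto simp: v_def)
    have v_cont: "continuous_on {x i..x (Suc i)} v"
      unfolding v_def using slope_pos[OF i] by (intro continuous_intros) auto
    have "continuous_on {x i..x (Suc i)} (\<lambda>z. h z + \<alpha> i (v z) * (g (v z) - B (v z)))"
      using continuous_on_subset[OF h_cont subinterval_subset[OF i]]
        continuous_on_compose2[OF \<alpha>_cont[OF i] v_cont v_maps]
        continuous_on_compose2[OF g_cont v_cont v_maps] continuous_on_compose2[OF B_cont v_cont v_maps]
      by (intro continuous_intros)
    moreover have "h z + \<alpha> i (v z) * (g (v z) - B (v z)) = rb_operator g z" if z: "z \<in> {x i..x (Suc i)}" for z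
      using rb_operator_eq[OF g_ends i affine_map_inverse(1)[OF i z]] affine_map_inverse(2)[OF i z]
      by (simp add: v_def)
    ultimately show ?thesis
      by (rule continuous_on_eq)
  qed
  have "continuous_on (\<Union>i\<in>{1..N-1}. {x i..x (Suc i)}) (rb_operator g)"
    by (rule continuous_on_closed_Union) (use piece in auto)
  then have "continuous_on {x 1..x N} (rb_operator g)"
    by (simp only: Icc_eq_UN_subintervals)
  moreover have "rb_operator g (x 1) = h (x 1)"
    using rb_operator_eq[OF g_ends, of 1 "x 1"] affine_map_first[of 1] g_ends B_first N
      x_first_less_last by simp
  moreover have "rb_operator g (x N) = h (x N)"
    using rb_operator_eq[OF g_ends, of "N - 1" "x N"] affine_map_last[of "N - 1"] g_ends B_last N
      x_first_less_last by (simp add: Suc_diff_1)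
  ultimately show ?thesis
    by (simp add: admissible_def rb_operator_def)
qed

lemma rb_operator_contraction:
  assumes g1: "admissible g1" and g2: "admissible g2"
    and D: "\<And>y. y \<in> {x 1..x N} \<Longrightarrow> \<bar>g1 y - g2 y\<bar> \<le> D" and z: "z \<in> {x 1..x N}"
  shows "\<bar>rb_operator g1 z - rb_operator g2 z\<bar> \<le> c * D"
proof -
  obtain i y where i: "i \<in> {1..N-1}" and y: "y \<in> {x 1..x N}" and z_eq: "z = a i * y + b i"
    using Icc_covered_by_affine_maps[OF z] .
  have "rb_operator g1 z - rb_operator g2 z = \<alpha> i y * (g1 y - g2 y)"
    using rb_operator_eq[of g1 i y] rb_operator_eq[of g2 i y] g1 g2 i y z_eq
    by (simp add: admissible_def algebra_simps)
  also have "\<bar>\<dots>\<bar> \<le> c * D"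
    unfolding abs_mult using \<alpha>_bound[OF i y] D[OF y] c_nonneg by (intro mult_mono) auto
  finally show ?thesis .
qed

lemma rb_iterates_uniform_limit:
  assumes g0: "admissible g0"
  obtains G where "uniform_limit {x 1..x N} (\<lambda>m. (rb_operator ^^ m) g0) G sequentially"
proof -
  define g where "g m = (rb_operator ^^ m) g0" for m
  have adm: "admissible (g m)" for m
    by (induction m) (simp_all add: g_def g0 rb_operator_admissible)
  have "continuous_on {x 1..x N} (\<lambda>z. g 1 z - g 0 z)"
    using adm by (intro continuous_intros) (auto simp: admissible_def)
  then obtain D where D: "\<forall>z\<in>{x 1..x N}. \<bar>g 1 z - g 0 z\<bar> \<le> D"
    using compact_imp_bounded[OF compact_continuous_image[OF _ compact_Icc]]
    by (force simp: bounded_real)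
  have g_Suc: "g (Suc m) = rb_operator (g m)" for m
    by (simp add: g_def)
  have step: "\<forall>z\<in>{x 1..x N}. \<bar>g (Suc m) z - g m z\<bar> \<le> D * c ^ m" for m
  proof (induction m)
    case (Suc m)
    then have "\<bar>rb_operator (g (Suc m)) z - rb_operator (g m) z\<bar> \<le> c * (D * c ^ m)"
      if "z \<in> {x 1..x N}" for z
      using rb_operator_contraction[OF adm adm _ that] by blast
    then show ?case
      by (simp add: g_Suc[of "Suc m"] g_Suc[of m] mult_ac)
  qed (use D in simp)
  have "uniform_limit {x 1..x N} (\<lambda>m z. \<Sum>j<m. g (Suc j) z - g j z)
      (\<lambda>z. \<Sum>j. g (Suc j) z - g j z) sequentially"
    by (rule Weierstrass_m_test[where M = "\<lambda>j. D * c ^ j"])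
      (use step summable_mult[OF summable_geometric[of c], of D] c_nonneg c_less_1 in auto)
  then have "uniform_limit {x 1..x N} (\<lambda>m z. g 0 z + (\<Sum>j<m. g (Suc j) z - g j z))
      (\<lambda>z. g 0 z + (\<Sum>j. g (Suc j) z - g j z)) sequentially"
    by (intro uniform_limit_add uniform_limit_const)
  moreover have "(\<lambda>m z. g 0 z + (\<Sum>j<m. g (Suc j) z - g j z)) = (\<lambda>m. (rb_operator ^^ m) g0)"
  proof (intro ext)
    fix m z
    show "g 0 z + (\<Sum>j<m. g (Suc j) z - g j z) = (rb_operator ^^ m) g0 z"
      using sum_lessThan_telescope[of "\<lambda>j. g j z" m] by (simp add: g_def)
  qed
  ultimately show ?thesis
    using that by simp
qed

lemma admissible_uniform_limit:
  assumes adm: "\<And>m. admissible (g m)" and lim: "uniform_limit {x 1..x N} g G sequentially"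
  shows "admissible (\<lambda>z. if z \<in> {x 1..x N} then G z else 0)"
proof -
  have "continuous_on {x 1..x N} G"
    using adm by (intro uniform_limit_theorem[OF _ lim]) (auto simp: admissible_def)
  moreover have "G z = h z" if "z \<in> {x 1, x N}" for z
  proof -
    have z: "z \<in> {x 1..x N}" and g_z: "\<And>m. g m z = h z"
      using that adm x_first_less_last by (auto simp: admissible_def)
    have "(\<lambda>m. g m z) \<longlonglongrightarrow> G z"
      using z by (rule tendsto_uniform_limitI[OF lim])
    then show ?thesis
      using LIMSEQ_unique[OF _ tendsto_const] by (simp add: g_z)
  qed
  ultimately show ?thesis
    using x_first_less_last by (auto simp: admissible_def intro: continuous_on_eq)
qed

lemma rb_operator_fixpoint_of_uniform_limit:
  assumes adm: "\<And>m. admissible (g m)" and g_Suc: "\<And>m. g (Suc m) = rb_operator (g m)"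
    and G: "admissible G" and lim: "uniform_limit {x 1..x N} g G sequentially"
    and z: "z \<in> {x 1..x N}"
  shows "rb_operator G z = G z"
proof -
  have "(\<lambda>m. g (Suc m) z) \<longlonglongrightarrow> rb_operator G z"
  proof (rule tendstoI)
    fix e :: real assume e: "0 < e"
    from uniform_limitD[OF lim e]
    show "\<forall>\<^sub>F m in sequentially. dist (g (Suc m) z) (rb_operator G z) < e"
    proof eventually_elim
      case (elim m)
      then have "\<bar>g m y - G y\<bar> \<le> e" if "y \<in> {x 1..x N}" for y
        using that by (simp add: dist_real_def less_imp_le)
      then have "\<bar>rb_operator (g m) z - rb_operator G z\<bar> \<le> c * e"
        using rb_operator_contraction[OF adm G _ z] by blast
      also have "\<dots> < e"
        using e c_less_1 by simp
      finally show ?case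
        by (simp add: g_Suc dist_real_def)
    qed
  qed
  moreover have "(\<lambda>m. g (Suc m) z) \<longlonglongrightarrow> G z"
    using tendsto_uniform_limitI[OF lim z] by (rule LIMSEQ_Suc)
  ultimately show ?thesis
    by (rule LIMSEQ_unique)
qed

lemma rb_fixpoint_exists: "\<exists>G. admissible G \<and> (\<forall>z\<in>{x 1..x N}. rb_operator G z = G z)"
proof -
  define g0 where "g0 z = (if z \<in> {x 1..x N} then h z else 0)" for z
  define g where "g m = (rb_operator ^^ m) g0" for m
  have "admissible g0"
    using h_cont x_first_less_last by (auto simp: admissible_def g0_def intro: continuous_on_eq)
  then have adm: "admissible (g m)" for m
    by (induction m) (simp_all add: g_def rb_operator_admissible)
  obtain G0 where lim0: "uniform_limit {x 1..x N} g G0 sequentially"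
    using rb_iterates_uniform_limit[OF \<open>admissible g0\<close>] unfolding g_def by blast
  define G where "G z = (if z \<in> {x 1..x N} then G0 z else 0)" for z
  have lim: "uniform_limit {x 1..x N} g G sequentially"
    using lim0 uniform_limit_cong'[where X = "{x 1..x N}" and f = g and g = g and h = G0 and i = G]
    by (simp add: G_def)
  have G: "admissible G"
    unfolding G_def by (rule admissible_uniform_limit[OF adm lim0])
  show ?thesis
    using rb_operator_fixpoint_of_uniform_limit[OF adm _ G lim] G by (auto simp: g_def)
qed

lemma fractal_solution_exists: "\<exists>g. fractal_solution g"
proof -
  obtain G where G: "admissible G" "\<And>z. z \<in> {x 1..x N} \<Longrightarrow> rb_operator G z = G z"
    using rb_fixpoint_exists by blast
  then have "G (a i * y + b i) = h (a i * y + b i) + \<alpha> i y * (G y - B y)"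
    if "i \<in> {1..N-1}" "y \<in> {x 1..x N}" for i y
    using rb_operator_eq[of G i y] G(2)[OF affine_map_mem_Icc[OF that]] G(1) that
    by (simp add: admissible_def)
  then show ?thesis
    using G(1) unfolding fractal_solution_def admissible_def by blast
qed

lemma fractal_solution_unique:
  assumes "fractal_solution g1" "fractal_solution g2"
  shows "g1 = g2"
proof
  fix z
  show "g1 z = g2 z"
  proof (cases "z \<in> {x 1..x N}")
    case True
    have "continuous_on {x 1..x N} (\<lambda>y. \<bar>g1 y - g2 y\<bar>)"
      using assms by (intro continuous_intros fractal_solution_continuous)
    moreover have "\<bar>g1 (a i * y + b i) - g2 (a i * y + b i)\<bar> \<le> c * \<bar>g1 y - g2 y\<bar> + 0"
      if "i \<in> {1..N-1}" "y \<in> {x 1..x N}" for i y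
    proof -
      have "g1 (a i * y + b i) - g2 (a i * y + b i) = \<alpha> i y * (g1 y - g2 y)"
        using fractal_solution_eq[OF assms(1) that] fractal_solution_eq[OF assms(2) that]
        by (simp add: algebra_simps)
      then show ?thesis
        using \<alpha>_bound[OF that] by (simp add: abs_mult mult_right_mono)
    qed
    ultimately have "\<bar>g1 z - g2 z\<bar> \<le> 0 / (1 - c)"
      using self_referential_bound[OF _ c_nonneg c_less_1 _ True] by blast
    then show ?thesis
      by simp
  next
    case False
    then show ?thesis
      using assms by (simp add: fractal_solution_def)
  qed
qed

lemma fractal_solution_dist_le:
  assumes g: "fractal_solution g" and E: "\<And>y. y \<in> {x 1..x N} \<Longrightarrow> \<bar>h y - B y\<bar> \<le> E"
    and z: "z \<in> {x 1..x N}"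
  shows "\<bar>g z - h z\<bar> \<le> c * E / (1 - c)"
proof -
  have "continuous_on {x 1..x N} (\<lambda>y. \<bar>g y - h y\<bar>)"
    using fractal_solution_continuous[OF g] h_cont by (intro continuous_intros)
  moreover have "\<bar>g (a i * y + b i) - h (a i * y + b i)\<bar> \<le> c * \<bar>g y - h y\<bar> + c * E"
    if i: "i \<in> {1..N-1}" and y: "y \<in> {x 1..x N}" for i y
  proof -
    have "\<bar>g (a i * y + b i) - h (a i * y + b i)\<bar> = \<bar>\<alpha> i y\<bar> * \<bar>g y - B y\<bar>"
      using fractal_solution_eq[OF g i y] by (simp add: abs_mult)
    also have "\<dots> \<le> c * (\<bar>g y - h y\<bar> + E)"
      using \<alpha>_bound[OF i y] E[OF y] c_nonneg by (intro mult_mono) auto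
    finally show ?thesis
      by (simp add: distrib_left)
  qed
  ultimately show ?thesis
    using self_referential_bound[OF _ c_nonneg c_less_1 _ z] by blast
qed

lemma fractal_solution_range:
  assumes g: "fractal_solution g"
    and step: "\<And>i y e v. i \<in> {1..N-1} \<Longrightarrow> y \<in> {x 1..x N} \<Longrightarrow> 0 \<le> e \<Longrightarrow> -e \<le> v \<Longrightarrow> v \<le> C + e \<Longrightarrow>
      -(c * e) \<le> h (a i * y + b i) + \<alpha> i y * (v - B y) \<and> h (a i * y + b i) + \<alpha> i y * (v - B y) \<le> C + c * e"
    and z: "z \<in> {x 1..x N}"
  shows "0 \<le> g z \<and> g z \<le> C"
proof -
  define \<phi> where "\<phi> y = max 0 (max (- g y) (g y - C))" for y
  have "continuous_on {x 1..x N} \<phi>"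
    using g unfolding \<phi>_def by (intro continuous_intros fractal_solution_continuous)
  moreover have "\<phi> (a i * y + b i) \<le> c * \<phi> y + 0"
    if i: "i \<in> {1..N-1}" and y: "y \<in> {x 1..x N}" for i y
  proof -
    have "- \<phi> y \<le> g y" "g y \<le> C + \<phi> y" "0 \<le> \<phi> y"
      by (auto simp: \<phi>_def)
    then have "- (c * \<phi> y) \<le> g (a i * y + b i) \<and> g (a i * y + b i) \<le> C + c * \<phi> y"
      using step[OF i y] fractal_solution_eq[OF g i y] by simp
    moreover have "0 \<le> c * \<phi> y"
      using c_nonneg by (simp add: \<phi>_def)
    ultimately show ?thesis
      by (simp add: \<phi>_def[of "a i * y + b i"])
  qed
  ultimately have "\<phi> z \<le> 0 / (1 - c)"
    using self_referential_bound[OF _ c_nonneg c_less_1 _ z] by blast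
  then show ?thesis
    by (simp add: \<phi>_def)
qed

lemma qfractal_fractal_solution:
  assumes "B = MKZ (x 1) (x N) n q h"
  shows "fractal_solution (qfractal x N a b \<alpha> n q h)"
proof -
  have "\<exists>!g. fractal_solution g"
    using fractal_solution_exists fractal_solution_unique by blast
  then have "fractal_solution (THE g. fractal_solution g)"
    by (rule theI')
  moreover have "(THE g. fractal_solution g) = qfractal x N a b \<alpha> n q h"
    unfolding fractal_solution_def qfractal_def by (simp only: assms)
  ultimately show ?thesis
    by simp
qed

end

section \<open>Positivity and convergence of quantum MKZ fractal functions\<close>

lemma continuous_on_compact_INF_le:
  fixes f :: "'a::topological_space \<Rightarrow> real"
  assumes "compact S" "continuous_on S f" "y \<in> S"
  shows "(INF z\<in>S. f z) \<le> f y"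
  using assms by (intro cINF_lower bounded_imp_bdd_below compact_imp_bounded compact_continuous_image)

lemma continuous_on_compact_le_SUP:
  fixes f :: "'a::topological_space \<Rightarrow> real"
  assumes "compact S" "continuous_on S f" "y \<in> S"
  shows "f y \<le> (SUP z\<in>S. f z)"
  using assms by (intro cSUP_upper bounded_imp_bdd_above compact_imp_bounded compact_continuous_image)

lemma abs_le_supnorm:
  assumes "compact S" "continuous_on S f" "y \<in> S"
  shows "\<bar>f y\<bar> \<le> supnorm S f"
  unfolding supnorm_def using assms by (intro continuous_on_compact_le_SUP continuous_intros)

lemma supnorm_le:
  assumes "S \<noteq> {}" "\<And>y. y \<in> S \<Longrightarrow> \<bar>f y\<bar> \<le> B"
  shows "supnorm S f \<le> B"
  unfolding supnorm_def using assms by (rule cSUP_least)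

lemma supnorm_uniform_bound:
  assumes A: "finite A" and S: "compact S"
    and cont: "\<forall>i\<in>A. continuous_on S (f i)" and less: "\<forall>i\<in>A. supnorm S (f i) < 1"
  obtains c where "c < 1" "\<forall>i\<in>A. \<forall>y\<in>S. \<bar>f i y\<bar> \<le> c"
proof
  define c where "c = Max (insert 0 ((\<lambda>i. supnorm S (f i)) ` A))"
  have "c \<in> insert 0 ((\<lambda>i. supnorm S (f i)) ` A)"
    unfolding c_def using A by (intro Max_in) auto
  then show "c < 1"
    using less by auto
  show "\<forall>i\<in>A. \<forall>y\<in>S. \<bar>f i y\<bar> \<le> c"
  proof (intro ballI)
    fix i y assume i: "i \<in> A" and y: "y \<in> S"
    have "\<bar>f i y\<bar> \<le> supnorm S (f i)"
      using cont i by (intro abs_le_supnorm[OF S _ y]) auto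
    also have "\<dots> \<le> c"
      unfolding c_def using A i by (intro Max_ge) auto
    finally show "\<bar>f i y\<bar> \<le> c" .
  qed
qed

text \<open>The algebra behind the scaling condition: if \<open>g\<close> lies within \<open>e\<close> of the slab \<open>[0, C]\<close> at
  \<open>y\<close>, then the right-hand side of the self-referential equation at \<open>u\<^sub>i(y)\<close> lies within \<open>c e\<close>
  of it. The two bounds on \<open>\<alpha>\<close> are used according to its sign.\<close>

lemma fractal_step_bounds:
  fixes F M v e \<alpha> c \<phi> \<Phi> \<phi>M \<Phi>M C :: real
  assumes F: "0 \<le> F" "\<phi> \<le> F" "F \<le> \<Phi>" "\<Phi> < C"
    and M: "0 \<le> \<phi>M" "\<phi>M \<le> M" "M \<le> \<Phi>M" "\<phi>M < C"
    and v: "0 \<le> e" "-e \<le> v" "v \<le> C + e" and \<alpha>c: "\<bar>\<alpha>\<bar> \<le> c"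
    and lower: "max (- \<phi> / (C - \<phi>M)) (- ((C - \<Phi>) / \<Phi>M)) \<le> \<alpha>"
    and upper: "\<alpha> \<le> min (\<phi> / \<Phi>M) ((C - \<Phi>) / (C - \<phi>M))"
  shows "-(c * e) \<le> F + \<alpha> * (v - M) \<and> F + \<alpha> * (v - M) \<le> C + c * e"
proof -
  have D: "0 < C - \<phi>M"
    using M by simp
  from lower have lower1: "- \<phi> / (C - \<phi>M) \<le> \<alpha>" and lower2: "- ((C - \<Phi>) / \<Phi>M) \<le> \<alpha>"
    by (simp_all only: max.bounded_iff)
  from upper have upper1: "\<alpha> \<le> \<phi> / \<Phi>M" and upper2: "\<alpha> \<le> (C - \<Phi>) / (C - \<phi>M)"
    by (simp_all only: min.bounded_iff)
  have \<alpha>e: "\<bar>\<alpha> * e\<bar> \<le> c * e"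
    using \<alpha>c v(1) by (simp add: abs_mult mult_right_mono)
  have \<alpha>D: "- \<phi> \<le> \<alpha> * (C - \<phi>M)" "\<alpha> * (C - \<phi>M) \<le> C - \<Phi>"
    using lower1 upper2 D by (simp_all only: pos_divide_le_eq pos_le_divide_eq)
  show ?thesis
  proof (cases "\<Phi>M = 0")
    case True
    then have "\<alpha> = 0"
      using lower2 upper1 by simp
    then show ?thesis
      using F \<alpha>e by simp
  next
    case False
    then have PM: "0 < \<Phi>M"
      using M by simp
    have \<alpha>P: "\<alpha> * \<Phi>M \<le> \<phi>" "- (C - \<Phi>) \<le> \<alpha> * \<Phi>M"
      using upper1 lower2 PM by (simp_all only: minus_divide_left pos_divide_le_eq pos_le_divide_eq)
    have \<alpha>e': "- (c * e) \<le> \<alpha> * e" "\<alpha> * e \<le> c * e"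
      using \<alpha>e by (simp_all add: abs_le_iff)
    show ?thesis
    proof (cases "0 \<le> \<alpha>")
      case True
      have "\<alpha> * (- e - \<Phi>M) \<le> \<alpha> * (v - M)" "\<alpha> * (v - M) \<le> \<alpha> * (e + (C - \<phi>M))"
        using True v M by (simp_all add: mult_left_mono)
      then have "- (\<alpha> * e) - \<alpha> * \<Phi>M \<le> \<alpha> * (v - M)" "\<alpha> * (v - M) \<le> \<alpha> * e + \<alpha> * (C - \<phi>M)"
        by (simp_all add: algebra_simps)
      then show ?thesis
        using \<alpha>P \<alpha>D \<alpha>e' F by linarith
    next
      case False
      have "\<alpha> * (e + (C - \<phi>M)) \<le> \<alpha> * (v - M)" "\<alpha> * (v - M) \<le> \<alpha> * (- e - \<Phi>M)"
        using False v M by (simp_all add: mult_left_mono_neg)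
      then have "\<alpha> * e + \<alpha> * (C - \<phi>M) \<le> \<alpha> * (v - M)" "\<alpha> * (v - M) \<le> - (\<alpha> * e) - \<alpha> * \<Phi>M"
        by (simp_all add: algebra_simps)
      then show ?thesis
        using \<alpha>P \<alpha>D \<alpha>e' F by linarith
    qed
  qed
qed

context affine_partition
begin

lemma fractal_equation_MKZ:
  assumes q: "0 < q" "q \<le> 1" and n: "0 < n" and h_cont: "continuous_on {x 1..x N} h"
    and \<alpha>_cont: "\<forall>i\<in>{1..N-1}. continuous_on {x 1..x N} (\<alpha> i)"
    and \<alpha>_bound: "\<forall>i\<in>{1..N-1}. \<forall>y\<in>{x 1..x N}. \<bar>\<alpha> i y\<bar> \<le> c" and c: "c < 1"
  shows "fractal_equation x N a b \<alpha> h (MKZ (x 1) (x N) n q h) c"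
proof unfold_locales
  show "continuous_on {x 1..x N} (MKZ (x 1) (x N) n q h)"
    using MKZ_continuous_on[OF x_first_less_last _ q(2) q(1) n h_cont] q by simp
  show "MKZ (x 1) (x N) n q h (x 1) = h (x 1)"
    using MKZ_left_endpoint[OF x_first_less_last _ q(2)] q
      compact_imp_bounded[OF compact_continuous_image[OF h_cont compact_Icc]] by simp
  show "MKZ (x 1) (x N) n q h (x N) = h (x N)"
    by (simp add: MKZ_def)
qed (use h_cont \<alpha>_cont \<alpha>_bound c in auto)

lemma affine_image_INF_SUP_bounds:
  assumes h_cont: "continuous_on {x 1..x N} h" and i: "i \<in> {1..N-1}" and y: "y \<in> {x 1..x N}"
  shows "(INF z\<in>{x 1..x N}. h (a i * z + b i)) \<le> h (a i * y + b i)"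
    and "h (a i * y + b i) \<le> (SUP z\<in>{x 1..x N}. h (a i * z + b i))"
    and "(SUP z\<in>{x 1..x N}. h (a i * z + b i)) \<le> supnorm {x 1..x N} h"
proof -
  have maps: "(\<lambda>z. a i * z + b i) ` {x 1..x N} \<subseteq> {x 1..x N}"
    using affine_map_mem_Icc[OF i] by auto
  have cont: "continuous_on {x 1..x N} (\<lambda>z. h (a i * z + b i))"
    by (intro continuous_on_compose2[OF h_cont _ maps] continuous_intros)
  show "(INF z\<in>{x 1..x N}. h (a i * z + b i)) \<le> h (a i * y + b i)"
    using continuous_on_compact_INF_le[OF compact_Icc cont y] .
  show "h (a i * y + b i) \<le> (SUP z\<in>{x 1..x N}. h (a i * z + b i))"
    using continuous_on_compact_le_SUP[OF compact_Icc cont y] .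
  show "(SUP z\<in>{x 1..x N}. h (a i * z + b i)) \<le> supnorm {x 1..x N} h"
  proof (rule cSUP_least)
    show "{x 1..x N} \<noteq> {}"
      using y by auto
    show "h (a i * z + b i) \<le> supnorm {x 1..x N} h" if z: "z \<in> {x 1..x N}" for z
      using abs_le_supnorm[OF compact_Icc h_cont affine_map_mem_Icc[OF i z]] by simp
  qed
qed

lemma qfractal_nonneg:
  assumes q: "0 < q" "q \<le> 1" and n: "0 < n"
    and h_cont: "continuous_on {x 1..x N} h" and h_nonneg: "\<forall>y\<in>{x 1..x N}. 0 \<le> h y"
    and \<alpha>_cont: "\<forall>i\<in>{1..N-1}. continuous_on {x 1..x N} (\<alpha> i)"
    and \<alpha>_bound: "\<forall>i\<in>{1..N-1}. \<forall>y\<in>{x 1..x N}. \<bar>\<alpha> i y\<bar> \<le> c" and c: "c < 1"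
    and C: "max (INF y\<in>{x 1..x N}. MKZ (x 1) (x N) n q h y) (supnorm {x 1..x N} h) < C"
    and \<alpha>_ineq: "\<forall>i\<in>{1..N-1}. \<forall>y\<in>{x 1..x N}.
        (let \<phi>i = (INF z\<in>{x 1..x N}. h (a i * z + b i));
             \<Phi>i = (SUP z\<in>{x 1..x N}. h (a i * z + b i));
             \<phi>M = (INF z\<in>{x 1..x N}. MKZ (x 1) (x N) n q h z);
             \<Phi>M = (SUP z\<in>{x 1..x N}. MKZ (x 1) (x N) n q h z);
             Cd = C
         in max (- \<phi>i / (Cd - \<phi>M)) (- ((Cd - \<Phi>i) / \<Phi>M)) \<le> \<alpha> i y \<and>
            \<alpha> i y \<le> min (\<phi>i / \<Phi>M) ((Cd - \<Phi>i) / (Cd - \<phi>M)))"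
    and y: "y \<in> {x 1..x N}"
  shows "0 \<le> qfractal x N a b \<alpha> n q h y"
proof -
  let ?M = "MKZ (x 1) (x N) n q h"
  interpret fractal_equation x N a b \<alpha> h ?M c
    by (rule fractal_equation_MKZ[OF q n h_cont \<alpha>_cont \<alpha>_bound c])
  have M_nonneg: "0 \<le> ?M z" if "z \<in> {x 1..x N}" for z
    using MKZ_nonneg[OF x_first_less_last _ q(2) that h_cont] q h_nonneg by simp
  have M_INF: "0 \<le> (INF z\<in>{x 1..x N}. ?M z)"
    using M_nonneg x_first_less_last by (intro cINF_greatest) auto
  have step: "-(c * e) \<le> h (a i * y + b i) + \<alpha> i y * (v - ?M y) \<and>
      h (a i * y + b i) + \<alpha> i y * (v - ?M y) \<le> C + c * e"
    if i: "i \<in> {1..N-1}" and y: "y \<in> {x 1..x N}" and v: "0 \<le> e" "-e \<le> v" "v \<le> C + e" for i y e v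
  proof (rule fractal_step_bounds)
    show "0 \<le> h (a i * y + b i)"
      using h_nonneg affine_map_mem_Icc[OF i y] by blast
    show "(INF z\<in>{x 1..x N}. h (a i * z + b i)) \<le> h (a i * y + b i)"
      "h (a i * y + b i) \<le> (SUP z\<in>{x 1..x N}. h (a i * z + b i))"
      using affine_image_INF_SUP_bounds[OF h_cont i y] by blast+
    show "(SUP z\<in>{x 1..x N}. h (a i * z + b i)) < C"
      using affine_image_INF_SUP_bounds(3)[OF h_cont i y] C by simp
    show "(INF z\<in>{x 1..x N}. ?M z) \<le> ?M y" "?M y \<le> (SUP z\<in>{x 1..x N}. ?M z)"
      using continuous_on_compact_INF_le[OF compact_Icc B_cont y]
        continuous_on_compact_le_SUP[OF compact_Icc B_cont y] by blast+
    show "(INF z\<in>{x 1..x N}. ?M z) < C"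
      using C by simp
    show "\<bar>\<alpha> i y\<bar> \<le> c"
      using \<alpha>_bound i y by blast
    show "max (- (INF z\<in>{x 1..x N}. h (a i * z + b i)) / (C - (INF z\<in>{x 1..x N}. ?M z)))
          (- ((C - (SUP z\<in>{x 1..x N}. h (a i * z + b i))) / (SUP z\<in>{x 1..x N}. ?M z))) \<le> \<alpha> i y"
      "\<alpha> i y \<le> min ((INF z\<in>{x 1..x N}. h (a i * z + b i)) / (SUP z\<in>{x 1..x N}. ?M z))
          ((C - (SUP z\<in>{x 1..x N}. h (a i * z + b i))) / (C - (INF z\<in>{x 1..x N}. ?M z)))"
      using \<alpha>_ineq i y unfolding Let_def by blast+
  qed (use M_INF v in auto)
  show ?thesis
    using fractal_solution_range[OF qfractal_fractal_solution[OF refl] step y] by simp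
qed

lemma qfractal_dist_le:
  assumes q: "0 < q" "q \<le> 1" and n: "0 < n"
    and h_cont: "continuous_on {x 1..x N} h" and h0_cont: "continuous_on {x 1..x N} h0"
    and \<alpha>_cont: "\<forall>i\<in>{1..N-1}. continuous_on {x 1..x N} (\<alpha> i)"
    and \<alpha>_bound: "\<forall>i\<in>{1..N-1}. \<forall>y\<in>{x 1..x N}. \<bar>\<alpha> i y\<bar> \<le> c" and c: "c < 1"
    and d: "\<forall>y\<in>{x 1..x N}. \<bar>h y - h0 y\<bar> \<le> d"
    and m: "\<forall>y\<in>{x 1..x N}. \<bar>MKZ (x 1) (x N) n q h0 y - h0 y\<bar> \<le> m"
    and y: "y \<in> {x 1..x N}"
  shows "\<bar>qfractal x N a b \<alpha> n q h y - h0 y\<bar> \<le> (2 * d + m) / (1 - c) + d"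
proof -
  let ?M = "MKZ (x 1) (x N) n q"
  interpret fractal_equation x N a b \<alpha> h "?M h" c
    by (rule fractal_equation_MKZ[OF q n h_cont \<alpha>_cont \<alpha>_bound c])
  have "\<bar>h z - ?M h z\<bar> \<le> 2 * d + m" if z: "z \<in> {x 1..x N}" for z
  proof -
    have "\<bar>?M h0 z - ?M h z\<bar> = \<bar>?M (\<lambda>z. h0 z - h z) z\<bar>"
      using MKZ_diff[OF x_first_less_last _ q(2) z h0_cont h_cont] q by simp
    also have "\<dots> \<le> ?M (\<lambda>_. d) z"
      using d q by (intro MKZ_abs_le[OF x_first_less_last _ q(2) z] continuous_intros h0_cont h_cont)
        (auto simp: abs_minus_commute)
    also have "\<dots> = d"
      using MKZ_const[OF x_first_less_last _ q(2) z] q by simp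
    finally show ?thesis
      using bspec[OF d z] bspec[OF m z] unfolding abs_le_iff by linarith
  qed
  then have "\<bar>qfractal x N a b \<alpha> n q h y - h y\<bar> \<le> c * (2 * d + m) / (1 - c)"
    using fractal_solution_dist_le[OF qfractal_fractal_solution[OF refl] _ y] by blast
  also have "\<dots> \<le> (2 * d + m) / (1 - c)"
  proof -
    have "0 \<le> 2 * d + m"
      using bspec[OF d y] bspec[OF m y] abs_ge_zero[of "h y - h0 y"]
        abs_ge_zero[of "MKZ (x 1) (x N) n q h0 y - h0 y"] by linarith
    then show ?thesis
      using c c_nonneg by (intro divide_right_mono mult_left_le_one_le) auto
  qed
  finally show ?thesis
    using bspec[OF d y] unfolding abs_le_iff by linarith
qed

lemma qfractal_double_limit:
  assumes q_range: "\<forall>n\<ge>1. 0 < q n \<and> q n \<le> 1" and q_lim: "q \<longlonglongrightarrow> 1"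
    and f_cont: "\<forall>k\<ge>1. continuous_on {x 1..x N} (f k)" and f0_cont: "continuous_on {x 1..x N} f0"
    and f_conv: "\<forall>\<epsilon>>0. \<exists>K. \<forall>k\<ge>K. k \<ge> 1 \<longrightarrow> supnorm {x 1..x N} (\<lambda>y. f k y - f0 y) < \<epsilon>"
    and \<alpha>_cont: "\<forall>i\<in>{1..N-1}. continuous_on {x 1..x N} (\<alpha> i)"
    and \<alpha>_bound: "\<forall>i\<in>{1..N-1}. \<forall>y\<in>{x 1..x N}. \<bar>\<alpha> i y\<bar> \<le> c" and c: "c < 1"
  shows "\<forall>\<epsilon>>0. \<exists>k0. \<forall>k\<ge>k0. \<forall>n\<ge>k0. k \<ge> 1 \<longrightarrow> n \<ge> 1 \<longrightarrow>
           supnorm {x 1..x N} (\<lambda>y. qfractal x N a b \<alpha> n (q n) (f k) y - f0 y) < \<epsilon>"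
proof (intro allI impI)
  fix \<epsilon> :: real assume \<epsilon>: "0 < \<epsilon>"
  define e where "e = \<epsilon> * (1 - c) / 8"
  have e: "0 < e"
    using \<epsilon> c by (simp add: e_def)
  obtain K where K: "\<And>k. K \<le> k \<Longrightarrow> 1 \<le> k \<Longrightarrow> supnorm {x 1..x N} (\<lambda>y. f k y - f0 y) < e"
    using f_conv e by blast
  have "\<forall>\<^sub>F n in sequentially. 0 \<le> q n \<and> q n \<le> 1"
    unfolding eventually_sequentially using q_range by (auto intro!: exI[of _ 1])
  from uniform_limitD[OF MKZ_uniform_limit[OF x_first_less_last q_lim this f0_cont] e]
  obtain n1 where n1: "\<forall>n\<ge>n1. \<forall>y\<in>{x 1..x N}. dist (MKZ (x 1) (x N) n (q n) f0 y) (f0 y) < e"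
    unfolding eventually_sequentially by blast
  show "\<exists>k0. \<forall>k\<ge>k0. \<forall>n\<ge>k0. k \<ge> 1 \<longrightarrow> n \<ge> 1 \<longrightarrow>
          supnorm {x 1..x N} (\<lambda>y. qfractal x N a b \<alpha> n (q n) (f k) y - f0 y) < \<epsilon>"
  proof (intro exI[of _ "max K n1"] allI impI)
    fix k n assume k: "max K n1 \<le> k" "1 \<le> k" and n: "max K n1 \<le> n" "1 \<le> n"
    have qn: "0 < q n" "q n \<le> 1" "0 < n"
      using q_range n by auto
    have fk: "continuous_on {x 1..x N} (f k)"
      using f_cont k by simp
    have dk: "\<forall>y\<in>{x 1..x N}. \<bar>f k y - f0 y\<bar> \<le> e"
    proof
      fix y assume y: "y \<in> {x 1..x N}"
      have "\<bar>f k y - f0 y\<bar> \<le> supnorm {x 1..x N} (\<lambda>y. f k y - f0 y)"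
        using fk f0_cont by (intro abs_le_supnorm[OF compact_Icc _ y] continuous_intros)
      also have "\<dots> < e"
        using K k by simp
      finally show "\<bar>f k y - f0 y\<bar> \<le> e"
        by simp
    qed
    have mn: "\<forall>y\<in>{x 1..x N}. \<bar>MKZ (x 1) (x N) n (q n) f0 y - f0 y\<bar> \<le> e"
      using n1 n by (simp add: dist_real_def less_imp_le)
    have "\<bar>qfractal x N a b \<alpha> n (q n) (f k) y - f0 y\<bar> \<le> (2 * e + e) / (1 - c) + e"
      if y: "y \<in> {x 1..x N}" for y
      by (rule qfractal_dist_le[OF qn fk f0_cont \<alpha>_cont \<alpha>_bound c dk mn y])
    then have "supnorm {x 1..x N} (\<lambda>y. qfractal x N a b \<alpha> n (q n) (f k) y - f0 y) \<le> 3 * e / (1 - c) + e"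
      using x_first_less_last by (intro supnorm_le) auto
    also have "\<dots> < \<epsilon>"
    proof -
      have "e \<le> \<epsilon> / 8"
        using \<epsilon> mult_nonneg_nonneg[OF _ scaling_bound_nonneg[OF \<alpha>_bound], of \<epsilon>]
        by (simp add: e_def field_simps)
      moreover have "3 * e / (1 - c) = 3 * \<epsilon> / 8"
        using c by (simp add: e_def field_simps)
      ultimately show ?thesis
        using \<epsilon> by linarith
    qed
    finally show "supnorm {x 1..x N} (\<lambda>y. qfractal x N a b \<alpha> n (q n) (f k) y - f0 y) < \<epsilon>" .
  qed
qed

end

theorem theorem4p2:
  fixes x :: "nat \<Rightarrow> real" and N :: nat
    and a b :: "nat \<Rightarrow> real"
    and \<alpha> :: "nat \<Rightarrow> real \<Rightarrow> real"
    and f :: "nat \<Rightarrow> real \<Rightarrow> real" and f0 :: "real \<Rightarrow> real"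
    and q :: "nat \<Rightarrow> real"
    and C :: "nat \<Rightarrow> nat \<Rightarrow> real"
  defines "I \<equiv> {x 1..x N}"
  assumes N: "2 \<le> N"
    and part: "\<forall>i\<in>{1..<N}. x i < x (Suc i)"
    and u_left: "\<forall>i\<in>{1..N-1}. a i * x 1 + b i = x i"
    and u_right: "\<forall>i\<in>{1..N-1}. a i * x N + b i = x (i + 1)"
    and f_cont: "\<forall>k\<ge>1. continuous_on I (f k)"
    and f_pos: "\<forall>k\<ge>1. \<forall>y\<in>I. 0 \<le> f k y"
    and f0_cont: "continuous_on I f0"
    and f_conv: "\<forall>\<epsilon>>0. \<exists>K. \<forall>k\<ge>K. k \<ge> 1 \<longrightarrow> supnorm I (\<lambda>y. f k y - f0 y) < \<epsilon>"
    and q_range: "\<forall>n\<ge>1. 0 < q n \<and> q n \<le> 1"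
    and q_lim: "q \<longlonglongrightarrow> 1"
    and C_pos: "\<forall>n\<ge>1. \<forall>k\<ge>1. 0 < C n k"
    and C_gt: "\<forall>n\<ge>1. \<forall>k\<ge>1.
        max (INF y\<in>I. MKZ (x 1) (x N) n (q n) (f k) y) (supnorm I (f k)) < C n k"
    and \<alpha>_cont: "\<forall>i\<in>{1..N-1}. continuous_on I (\<alpha> i)"
    and \<alpha>_norm: "\<forall>i\<in>{1..N-1}. supnorm I (\<alpha> i) < 1"
    and \<alpha>_bounds: "\<forall>k\<ge>1. \<forall>n\<ge>1. \<forall>i\<in>{1..N-1}. \<forall>y\<in>I.
        (let \<phi>i = (INF z\<in>I. f k (a i * z + b i));
             \<Phi>i = (SUP z\<in>I. f k (a i * z + b i));
             \<phi>M = (INF z\<in>I. MKZ (x 1) (x N) n (q n) (f k) z);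
             \<Phi>M = (SUP z\<in>I. MKZ (x 1) (x N) n (q n) (f k) z);
             Cd = C n k
         in max (- \<phi>i / (Cd - \<phi>M)) (- ((Cd - \<Phi>i) / \<Phi>M)) \<le> \<alpha> i y \<and>
            \<alpha> i y \<le> min (\<phi>i / \<Phi>M) ((Cd - \<Phi>i) / (Cd - \<phi>M)))"
  shows "(\<forall>k\<ge>1. \<forall>n\<ge>1. \<forall>y\<in>I. 0 \<le> qfractal x N a b \<alpha> n (q n) (f k) y) \<and>
         (\<forall>\<epsilon>>0. \<exists>k0. \<forall>k\<ge>k0. \<forall>n\<ge>k0. k \<ge> 1 \<longrightarrow> n \<ge> 1 \<longrightarrow>
            supnorm I (\<lambda>y. qfractal x N a b \<alpha> n (q n) (f k) y - f0 y) < \<epsilon>)"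
proof -
  interpret affine_partition x N a b
    using N part u_left u_right by unfold_locales
  have \<alpha>_cont': "\<forall>i\<in>{1..N-1}. continuous_on {x 1..x N} (\<alpha> i)"
    using \<alpha>_cont unfolding I_def .
  obtain c where c: "c < 1" and \<alpha>_bound: "\<forall>i\<in>{1..N-1}. \<forall>y\<in>{x 1..x N}. \<bar>\<alpha> i y\<bar> \<le> c"
    using supnorm_uniform_bound[OF finite_atLeastAtMost compact_Icc \<alpha>_cont'] \<alpha>_norm
    unfolding I_def by blast
  have "0 \<le> qfractal x N a b \<alpha> n (q n) (f k) y" if k: "1 \<le> k" and n: "1 \<le> n" and y: "y \<in> I" for k n y
  proof (rule qfractal_nonneg[OF _ _ _ _ _ \<alpha>_cont' \<alpha>_bound c, where C = "C n k"])
    show "0 < q n" "q n \<le> 1" "0 < n"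
      using q_range n by auto
  qed (use k n y f_cont f_pos C_gt \<alpha>_bounds in \<open>unfold I_def, blast\<close>)+
  moreover have "\<forall>\<epsilon>>0. \<exists>k0. \<forall>k\<ge>k0. \<forall>n\<ge>k0. k \<ge> 1 \<longrightarrow> n \<ge> 1 \<longrightarrow>
      supnorm I (\<lambda>y. qfractal x N a b \<alpha> n (q n) (f k) y - f0 y) < \<epsilon>"
    using qfractal_double_limit[OF q_range q_lim _ _ _ \<alpha>_cont' \<alpha>_bound c] f_cont f0_cont f_conv
    unfolding I_def by blast
  ultimately show ?thesis
    by blast
qed

end
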